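(* Let $N\ge1$, $d\ge1$, and let $U_1,\dots,U_N:\mathbb{R}^d\to\mathbb{R}$ and $U=\sum_n U_n$ satisfy: (A1) each $U_n$ is $C^2$ with $K$-Lipschitz gradient for some $K>0$; (A2) each $U_n$ is coercive and there is $C_1>0$ with $\langle x,\nabla U_n(x)\rangle\ge0$ for $\|x\|\ge C_1$; (A3) $\min_x U(x)=0$ and $\inf_x(\|\nabla U(x)\|^2-\Delta U(x))>-\infty$; (A4) the probability measures $\pi^\varepsilon$ with density proportional to $\exp(-2U(x)/\varepsilon^2)$ have a weak limit as $\varepsilon\to0$; (A5) $\liminf_{\|x\|\to\infty}\langle \nabla U(x)/\|\nabla U(x)\|, x/\|x\|\rangle\ge((4d-4)/(4d-3))^{1/2}$, $\liminf_{\|x\|\to\infty}\|\nabla U(x)\|/\|x\|>0$, $\limsup_{\|x\|\to\infty}\|\nabla U(x)\|/\|x\|<\infty$. Let $G$ be an undirected connected graph on $\{1,\dots,N\}$ with Laplacian $L$. Let $\mathbf{x}_t\in\mathbb{R}^{Nd}$ (stacking $\mathbf{x}_n(t)\in\mathbb{R}^d$) satisfy $$\mathbf{x}_{t+1}=\mathbf{x}_t-\beta_t(L\otimes I_d)\mathbf{x}_t-\alpha_t\big(\nabla\hat U(\mathbf{x}_t)+\boldsymbol{\xi}_t\big)+\gamma_t\mathbf{w}_t,$$ where $\hat U(\mathbf{x})=\sum_{n=1}^N U_n(\mathbf{x}_n)$, and with $\mathcal{F}_t$ the natural filtration generated by $\{\mathbf{x}_s\}_{s\le t}$, $\{\boldsymbol{\xi}_s,\mathbf{w}_s\}_{s\le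 t-1}$: (A6) $\{\boldsymbol{\xi}_t\}$ is $\{\mathcal{F}_{t+1}\}$-adapted, $\mathbb{E}[\boldsymbol{\xi}_t\mid\mathcal{F}_t]=0$, $\mathbb{E}[\|\boldsymbol{\xi}_t\|^2\mid\mathcal{F}_t]<B$ for some $B>0$; (A7) $\mathbf{w}_t=(\mathbf{w}_n(t))_n$ where each $\{\mathbf{w}_n(t)\}_t$ is i.i.d. standard Gaussian in $\mathbb{R}^d$, $\mathbf{w}_n(t)$ is independent of $\mathcal{F}_t$, and the sequences for different $n$ are mutually independent; (A8) for $t$ large, $\alpha_t=c_\alpha/t$, $\beta_t=c_\beta/t^{\tau_\beta}$, $\gamma_t=c_\gamma/(t^{1/2}\sqrt{\log\log t})$ with $c_\alpha,c_\beta,c_\gamma>0$, $\tau_\beta\in(0,1/2)$. Let $\bar{\mathbf{x}}(t)=\frac1N\sum_{n=1}^N\mathbf{x}_n(t)$. Then with probability 1, for every $\tau\in[0,1/2-\tau_\beta)$ and every $n=1,\dots,N$, $$\lim_{t\to\infty}t^\tau\|\mathbf{x}_n(t)-\bar{\mathbf{x}}(t)\|=0.$$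
   Context: $\otimes$ is the Kronecker product; $\|\cdot\|$ is the Euclidean norm; the initial condition $\mathbf{x}_1$ is deterministic. *)

theory Defs
  imports "HOL-Probability.Probability"
begin

definition undirected_graph :: "('n \<Rightarrow> 'n \<Rightarrow> bool) \<Rightarrow> bool" where
  "undirected_graph E \<longleftrightarrow> (\<forall>i j. E i j \<longrightarrow> E j i) \<and> (\<forall>i. \<not> E i i)"

definition connected_graph :: "('n \<Rightarrow> 'n \<Rightarrow> bool) \<Rightarrow> bool" where
  "connected_graph E \<longleftrightarrow> (\<forall>i j. (i, j) \<in> {(a, b). E a b}\<^sup>*)"

definition graph_laplacian :: "('n::finite \<Rightarrow> 'n \<Rightarrow> bool) \<Rightarrow> 'n \<Rightarrow> 'n \<Rightarrow> real" where
  "graph_laplacian E i j =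
     (if i = j then real (card {k. E i k}) else if E i j then -1 else 0)"

text \<open>(L \<otimes> I_d) applied to a stacked vector x (node blocks x $ n).\<close>
definition kron_laplacian ::
  "('n::finite \<Rightarrow> 'n \<Rightarrow> real) \<Rightarrow> real^'d^'n \<Rightarrow> real^'d^'n" where
  "kron_laplacian L x = (\<chi> n. \<Sum>m\<in>UNIV. L n m *\<^sub>R x $ m)"

definition trace_hessian :: "('a::euclidean_space \<Rightarrow> 'a \<Rightarrow>\<^sub>L 'a) \<Rightarrow> 'a \<Rightarrow> real" where
  "trace_hessian H x = (\<Sum>i\<in>Basis. inner (blinfun_apply (H x) i) i)"

definition gibbs_measure :: "('a::euclidean_space \<Rightarrow> real) \<Rightarrow> real \<Rightarrow> 'a measure" where
  "gibbs_measure U eps =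
     density lborel (\<lambda>x. ennreal (exp (- 2 * U x / eps\<^sup>2) /
        (\<integral>y. exp (- 2 * U y / eps\<^sup>2) \<partial>lborel)))"

definition weak_limit_at_zero :: "(real \<Rightarrow> 'a::euclidean_space measure) \<Rightarrow> 'a measure \<Rightarrow> bool" where
  "weak_limit_at_zero P mu \<longleftrightarrow> prob_space mu \<and> sets mu = sets borel \<and>
     (\<forall>f :: 'a \<Rightarrow> real. continuous_on UNIV f \<and> bounded (range f) \<longrightarrow>
        ((\<lambda>eps. \<integral>x. f x \<partial>(P eps)) \<longlongrightarrow> (\<integral>x. f x \<partial>mu)) (at_right 0))"

definition std_gaussian :: "(real^'d) measure" where
  "std_gaussian = density lborel (\<lambda>x. ennreal (\<Prod>i\<in>UNIV. std_normal_density (x $ i)))"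

definition gen_sets :: "'a measure \<Rightarrow> ('a \<Rightarrow> 'b::topological_space) \<Rightarrow> 'a set set" where
  "gen_sets M X = {X -` A \<inter> space M | A. A \<in> sets borel}"

definition nat_filtration ::
  "'a measure \<Rightarrow> (nat \<Rightarrow> 'a \<Rightarrow> 'b::topological_space) \<Rightarrow> (nat \<Rightarrow> 'a \<Rightarrow> 'b) \<Rightarrow> (nat \<Rightarrow> 'a \<Rightarrow> 'b)
     \<Rightarrow> nat \<Rightarrow> 'a measure" where
  "nat_filtration M x xi w t = sigma (space M)
     ((\<Union>s\<in>{..t}. gen_sets M (x s)) \<union> (\<Union>s\<in>{..<t}. gen_sets M (xi s) \<union> gen_sets M (w s)))"

end

theory Submission
  imports Defs
begin

text \<open>Write \<open>y t\<close> for the disagreement of \<open>x t\<close>, i.e. every block minus the node average.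
  Disagreement commutes with \<open>L \<otimes> I\<close>, and by the spectral gap of the Laplacian of a connected
  graph the consensus step \<open>I - \<beta> t (L \<otimes> I)\<close> contracts it by the factor \<open>1 - \<mu> \<beta> t / 4\<close>, so
  \<open>\<parallel>y (t+1)\<parallel> \<le> (1 - c t\<^bsup>-\<tau>\<^sub>\<beta>\<^esup>) \<parallel>y t\<parallel> + \<alpha> t (K \<parallel>x t\<parallel> + C) + \<parallel>\<alpha> t \<xi> t\<parallel> + \<parallel>\<gamma> t w t\<parallel>\<close>.
  On every path with \<open>\<parallel>\<xi> t\<parallel> \<le> t\<^bsup>1/2+\<epsilon>\<^esup>\<close> and \<open>\<parallel>w t\<parallel> = O(ln t)\<close>, a gradient step expands
  the norm only by \<open>1 + O(\<alpha> t\<^sup>2)\<close> thanks to the outward gradient condition, so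
  \<open>\<parallel>x t\<parallel> = O(t\<^bsup>1/2+\<epsilon>\<^esup>)\<close>; then every forcing term is \<open>O(t\<^bsup>\<epsilon>-1/2\<^esup>)\<close>, and a Chung-type
  lemma for such recursions yields \<open>\<parallel>y t\<parallel> = O(t\<^bsup>\<tau>\<^sub>\<beta>+\<epsilon>-1/2\<^esup>)\<close>.
  Both noise bounds hold almost surely by Borel--Cantelli: for \<open>\<xi>\<close> through Markov's inequality
  and the bounded conditional second moments, for \<open>w\<close> through Chernoff's inequality and the
  exponential moment of the Gaussian.\<close>

abbreviation stacked_laplacian :: "('n::finite \<Rightarrow> 'n \<Rightarrow> bool) \<Rightarrow> real^'d^'n \<Rightarrow> real^'d^'n" where
  "stacked_laplacian E \<equiv> kron_laplacian (graph_laplacian E)"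

definition dirichlet_form :: "('n::finite \<Rightarrow> 'n \<Rightarrow> bool) \<Rightarrow> real^'d^'n \<Rightarrow> real" where
  "dirichlet_form E y = (\<Sum>i\<in>UNIV. \<Sum>j\<in>UNIV. if E i j then (norm (y $ i - y $ j))\<^sup>2 else 0)"

lemma power2_norm_vec: "(norm (y::'a::real_inner^'n))\<^sup>2 = (\<Sum>i\<in>UNIV. (norm (y $ i))\<^sup>2)"
  by (simp add: power2_norm_eq_inner inner_vec_def)

lemma linear_kron_laplacian: "linear (kron_laplacian L)"
  by (rule linearI) (simp_all add: kron_laplacian_def vec_eq_iff scaleR_add_right sum.distrib
      scaleR_sum_right mult_ac)

lemma stacked_laplacian_nth:
  assumes "undirected_graph E"
  shows "stacked_laplacian E y $ i = (\<Sum>m\<in>UNIV. if E i m then y $ i - y $ m else 0)"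
proof -
  have "\<not> E i i" using assms unfolding undirected_graph_def by auto
  then have "stacked_laplacian E y $ i
      = (\<Sum>m\<in>UNIV. (if m = i then real (card {k. E i k}) *\<^sub>R y $ i else 0) - (if E i m then y $ m else 0))"
    unfolding kron_laplacian_def by (simp, intro sum.cong) (auto simp: graph_laplacian_def)
  also have "\<dots> = (\<Sum>m\<in>{k. E i k}. y $ i) - (\<Sum>m\<in>UNIV. if E i m then y $ m else 0)"
    by (simp add: sum_subtractf sum_constant_scaleR del: sum_constant)
  also have "\<dots> = (\<Sum>m\<in>UNIV. if E i m then y $ i - y $ m else 0)"
    by (simp add: sum.If_cases sum_subtractf)
  finally show ?thesis .
qed

lemma stacked_laplacian_const:
  assumes "undirected_graph E"
  shows "stacked_laplacian E (\<chi> n. c) = 0"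
proof -
  have "stacked_laplacian E (\<chi> n. c) $ i = 0" for i
    unfolding stacked_laplacian_nth[OF assms] by (rule sum.neutral) simp
  then show ?thesis by (simp add: vec_eq_iff del: vec_component)
qed

lemma sum_stacked_laplacian:
  assumes "undirected_graph E"
  shows "(\<Sum>n\<in>UNIV. stacked_laplacian E y $ n) = 0"
proof -
  have sym: "E i j = E j i" for i j using assms unfolding undirected_graph_def by auto
  define S where "S = (\<Sum>n\<in>UNIV. \<Sum>m\<in>UNIV. if E n m then y $ n - y $ m else 0)"
  have "S = (\<Sum>n\<in>UNIV. \<Sum>m\<in>UNIV. if E m n then y $ m - y $ n else 0)"
    unfolding S_def by (rule sum.swap)
  also have "\<dots> = - S"
    unfolding S_def by (simp add: sum_negf[symmetric] sym if_distrib[of uminus] cong: if_cong)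
  finally have "S = 0"
    by (simp add: eq_neg_iff_add_eq_0 flip: scaleR_2)
  then show ?thesis by (simp add: stacked_laplacian_nth[OF assms] S_def)
qed

lemma inner_stacked_laplacian:
  assumes "undirected_graph E"
  shows "inner y (stacked_laplacian E y) = dirichlet_form E y / 2"
proof -
  have sym: "E i j = E j i" for i j using assms unfolding undirected_graph_def by auto
  define S where "S = (\<Sum>i\<in>UNIV. \<Sum>m\<in>UNIV. if E i m then inner (y $ i) (y $ i - y $ m) else 0)"
  have inner_S: "inner y (stacked_laplacian E y) = S"
    unfolding S_def inner_vec_def[of y] stacked_laplacian_nth[OF assms] inner_sum_right
    by (intro sum.cong) auto
  have swap: "S = (\<Sum>i\<in>UNIV. \<Sum>m\<in>UNIV. if E i m then inner (y $ m) (y $ m - y $ i) else 0)"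
    unfolding S_def by (subst sum.swap) (simp add: sym)
  have "dirichlet_form E y = (\<Sum>i\<in>UNIV. \<Sum>m\<in>UNIV.
        (if E i m then inner (y $ i) (y $ i - y $ m) else 0)
      + (if E i m then inner (y $ m) (y $ m - y $ i) else 0))"
    unfolding dirichlet_form_def
    by (intro sum.cong) (auto simp: power2_norm_eq_inner algebra_simps inner_commute)
  also have "\<dots> = S + S"
    by (simp only: sum.distrib S_def[symmetric] swap[symmetric])
  finally show ?thesis using inner_S by simp
qed

lemma dirichlet_form_nonneg: "0 \<le> dirichlet_form E y"
  unfolding dirichlet_form_def by (intro sum_nonneg) auto

lemma norm_stacked_laplacian_sq:
  assumes "undirected_graph E"
  shows "(norm (stacked_laplacian E y))\<^sup>2 \<le> real CARD('n) * dirichlet_form E (y::real^'d^'n::finite)"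
proof -
  have "(norm (stacked_laplacian E y $ i))\<^sup>2
      \<le> real CARD('n) * (\<Sum>m\<in>UNIV. if E i m then (norm (y $ i - y $ m))\<^sup>2 else 0)" for i
  proof -
    have "norm (stacked_laplacian E y $ i) \<le> (\<Sum>m\<in>UNIV. if E i m then norm (y $ i - y $ m) else 0)"
      unfolding stacked_laplacian_nth[OF assms]
      by (rule order.trans[OF norm_sum]) (rule sum_mono, auto)
    then have "(norm (stacked_laplacian E y $ i))\<^sup>2
        \<le> (\<Sum>m\<in>UNIV. if E i m then norm (y $ i - y $ m) else 0)\<^sup>2"
      by (intro power_mono) auto
    also have "\<dots> \<le> (\<Sum>m\<in>UNIV. (if E i m then norm (y $ i - y $ m) else 0)\<^sup>2) * CARD('n)"
      by (rule sum_squared_le_sum_of_squares)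
    finally show ?thesis by (simp add: mult.commute if_distrib[of "\<lambda>a. a\<^sup>2"] cong: if_cong)
  qed
  then show ?thesis
    unfolding power2_norm_vec dirichlet_form_def sum_distrib_left by (rule sum_mono)
qed

lemma dirichlet_form_le: "dirichlet_form E y \<le> 4 * real CARD('n) * (norm (y::real^'d^'n::finite))\<^sup>2"
proof -
  have "(norm (y $ i - y $ j))\<^sup>2 \<le> 2 * (norm (y $ i))\<^sup>2 + 2 * (norm (y $ j))\<^sup>2" for i j
  proof -
    have "(norm (y $ i - y $ j))\<^sup>2 \<le> (norm (y $ i) + norm (y $ j))\<^sup>2"
      by (intro power_mono norm_triangle_ineq4) auto
    also have "\<dots> \<le> 2 * (norm (y $ i))\<^sup>2 + 2 * (norm (y $ j))\<^sup>2"
      using zero_le_power2[of "norm (y $ i) - norm (y $ j)"] by (simp add: power2_eq_square algebra_simps)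
    finally show ?thesis .
  qed
  then have "dirichlet_form E y \<le> (\<Sum>i\<in>UNIV. \<Sum>j\<in>UNIV. 2 * (norm (y $ i))\<^sup>2 + 2 * (norm (y $ j))\<^sup>2)"
    unfolding dirichlet_form_def by (intro sum_mono) auto
  also have "\<dots> = 4 * real CARD('n) * (norm y)\<^sup>2"
    by (simp add: sum.distrib power2_norm_vec sum_distrib_left[symmetric])
  finally show ?thesis .
qed

lemma norm_stacked_laplacian_le:
  assumes "undirected_graph E"
  shows "norm (stacked_laplacian E y) \<le> 2 * real CARD('n) * norm (y::real^'d^'n::finite)"
proof (rule power2_le_imp_le)
  have "(norm (stacked_laplacian E y))\<^sup>2 \<le> real CARD('n) * dirichlet_form E y"
    by (rule norm_stacked_laplacian_sq[OF assms])
  also have "\<dots> \<le> real CARD('n) * (4 * real CARD('n) * (norm y)\<^sup>2)"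
    by (intro mult_left_mono dirichlet_form_le) simp
  finally show "(norm (stacked_laplacian E y))\<^sup>2 \<le> (2 * real CARD('n) * norm y)\<^sup>2"
    by (simp add: power2_eq_square mult_ac)
qed simp

lemma norm_diff_le_sqrt_dirichlet_form:
  assumes "E i j"
  shows "norm (y $ i - y $ j) \<le> sqrt (dirichlet_form E (y::real^'d^'n::finite))"
proof (rule real_le_rsqrt)
  have "(norm (y $ i - y $ j))\<^sup>2 \<le> (\<Sum>m\<in>UNIV. if E i m then (norm (y $ i - y $ m))\<^sup>2 else 0)"
    using member_le_sum[of j UNIV "\<lambda>m. if E i m then (norm (y $ i - y $ m))\<^sup>2 else 0"] assms by auto
  also have "\<dots> \<le> dirichlet_form E y"
    unfolding dirichlet_form_def by (rule member_le_sum) (auto intro: sum_nonneg)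
  finally show "(norm (y $ i - y $ j))\<^sup>2 \<le> dirichlet_form E y" .
qed

lemma norm_diff_le_path_dirichlet_form:
  assumes "(i, j) \<in> {(a, b). E a b}\<^sup>*"
  obtains k where "\<And>y::real^'d^'n::finite. norm (y $ i - y $ j) \<le> k * sqrt (dirichlet_form E y)"
  using assms
proof (induction arbitrary: thesis rule: rtrancl_induct)
  case base
  then show ?case by (metis diff_self norm_zero mult_zero_left order.refl)
next
  case (step b c)
  then obtain k where k: "\<And>y::real^'d^'n. norm (y $ i - y $ b) \<le> k * sqrt (dirichlet_form E y)"
    by blast
  have "norm (y $ i - y $ c) \<le> (k + 1) * sqrt (dirichlet_form E y)" for y :: "real^'d^'n"
    using norm_triangle_ineq[of "y $ i - y $ b" "y $ b - y $ c"] k[of y]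
      norm_diff_le_sqrt_dirichlet_form[of E b c y] step(2)
    by (simp add: algebra_simps)
  then show ?case by (rule step.prems)
qed

lemma connected_graph_spectral_gap:
  assumes "connected_graph E"
  obtains \<mu> where "\<mu> > 0"
    and "\<And>y::real^'d^'n::finite. (\<Sum>n\<in>UNIV. y $ n) = 0 \<Longrightarrow> \<mu> * (norm y)\<^sup>2 \<le> dirichlet_form E y"
proof -
  have "\<exists>k. \<forall>y::real^'d^'n. norm (y $ i - y $ j) \<le> k * sqrt (dirichlet_form E y)" for i j
    using assms norm_diff_le_path_dirichlet_form[of i j E] unfolding connected_graph_def by metis
  then obtain k where k: "\<And>i j (y::real^'d^'n). norm (y $ i - y $ j) \<le> k i j * sqrt (dirichlet_form E y)"
    by metis
  define k0 where "k0 = (\<Sum>i\<in>UNIV. \<Sum>j\<in>UNIV. \<bar>k i j\<bar>)"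
  have k_le: "k i j \<le> k0" for i j
    using member_le_sum[of j UNIV "\<lambda>j. \<bar>k i j\<bar>"]
      member_le_sum[of i UNIV "\<lambda>i. \<Sum>j\<in>UNIV. \<bar>k i j\<bar>"]
    unfolding k0_def by (force intro: sum_nonneg)
  have k0: "0 \<le> k0" unfolding k0_def by (intro sum_nonneg) auto
  define N where "N = real CARD('n)"
  have N: "0 < N" unfolding N_def by simp
  have d: "0 < N * k0\<^sup>2 + 1" using N by (simp add: add_nonneg_pos)
  show thesis
  proof
    show "0 < 1 / (N * k0\<^sup>2 + 1)" using d by simp
    fix y :: "real^'d^'n"
    assume sum_0: "(\<Sum>n\<in>UNIV. y $ n) = 0"
    define Q where "Q = dirichlet_form E y"
    have Q: "0 \<le> Q" unfolding Q_def by (rule dirichlet_form_nonneg)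
    have "norm (y $ i) \<le> k0 * sqrt Q" for i
    proof -
      have "N *\<^sub>R y $ i = (\<Sum>j\<in>UNIV. y $ i - y $ j)"
        by (simp add: sum_subtractf sum_0 N_def sum_constant_scaleR del: sum_constant)
      then have "N * norm (y $ i) = norm (\<Sum>j\<in>UNIV. y $ i - y $ j)"
        using N by (metis abs_of_pos norm_scaleR)
      also have "\<dots> \<le> (\<Sum>j\<in>UNIV. norm (y $ i - y $ j))"
        by (rule norm_sum)
      also have "\<dots> \<le> (\<Sum>j\<in>(UNIV::'n set). k0 * sqrt Q)"
        using k k_le Q unfolding Q_def
        by (intro sum_mono) (meson mult_right_mono order.trans real_sqrt_ge_zero)
      finally show ?thesis using N by (simp add: N_def)
    qed
    then have "(norm y)\<^sup>2 \<le> (\<Sum>i\<in>(UNIV::'n set). (k0 * sqrt Q)\<^sup>2)"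
      unfolding power2_norm_vec[of y] by (intro sum_mono power_mono) auto
    also have "\<dots> = N * k0\<^sup>2 * Q" using Q by (simp add: N_def power_mult_distrib)
    also have "\<dots> \<le> (N * k0\<^sup>2 + 1) * Q" using Q by (simp add: algebra_simps)
    finally show "1 / (N * k0\<^sup>2 + 1) * (norm y)\<^sup>2 \<le> dirichlet_form E y"
      using d by (simp add: Q_def pos_divide_le_eq mult.commute)
  qed
qed

definition node_average :: "real^'d^'n::finite \<Rightarrow> real^'d" where
  "node_average z = (1 / real CARD('n)) *\<^sub>R (\<Sum>m\<in>UNIV. z $ m)"

definition disagreement :: "real^'d^'n::finite \<Rightarrow> real^'d^'n" where
  "disagreement z = (\<chi> n. z $ n - node_average z)"

lemma linear_disagreement: "linear disagreement"
  by (rule linearI)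
    (simp_all add: disagreement_def node_average_def vec_eq_iff sum.distrib scaleR_sum_right
      algebra_simps)

lemma sum_disagreement: "(\<Sum>n\<in>UNIV. disagreement z $ n) = 0"
  by (simp add: disagreement_def node_average_def sum_subtractf sum_constant_scaleR del: sum_constant)

lemma disagreement_stacked_laplacian:
  assumes "undirected_graph E"
  shows "disagreement (stacked_laplacian E z) = stacked_laplacian E (disagreement z)"
proof -
  have "node_average (stacked_laplacian E z) = 0"
    by (simp add: node_average_def sum_stacked_laplacian[OF assms])
  then have "disagreement (stacked_laplacian E z) = stacked_laplacian E z"
    by (simp add: disagreement_def)
  moreover have "disagreement z = z - (\<chi> n. node_average z)"
    by (simp add: disagreement_def vec_eq_iff)
  ultimately show ?thesis
    by (simp add: linear_diff[OF linear_kron_laplacian] stacked_laplacian_const[OF assms])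
qed

lemma norm_disagreement_le: "norm (disagreement z) \<le> norm (z::real^'d^'n::finite)"
proof -
  define c :: "real^'d^'n" where "c = (\<chi> n. node_average z)"
  have z: "disagreement z + c = z" by (simp add: disagreement_def c_def vec_eq_iff)
  have "inner (disagreement z) c = inner (\<Sum>n\<in>UNIV. disagreement z $ n) (node_average z)"
    unfolding c_def inner_vec_def[of "disagreement z"] by (simp add: inner_sum_left)
  then have "orthogonal (disagreement z) c" by (simp add: sum_disagreement orthogonal_def)
  then have "(norm z)\<^sup>2 = (norm (disagreement z))\<^sup>2 + (norm c)\<^sup>2"
    by (metis norm_add_Pythagorean z)
  then have "(norm (disagreement z))\<^sup>2 \<le> (norm z)\<^sup>2" by simp
  then show ?thesis by (rule power2_le_imp_le) simp
qed

lemma norm_nth_disagreement_le: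
  "norm (z $ n - (1 / real CARD('n)) *\<^sub>R (\<Sum>m\<in>UNIV. z $ m)) \<le> norm (disagreement (z::real^'d^'n::finite))"
proof -
  have "norm (disagreement z $ n) \<le> norm (disagreement z)" by (rule Finite_Cartesian_Product.norm_nth_le)
  then show ?thesis by (simp add: disagreement_def node_average_def)
qed

lemma norm_consensus_step_sq:
  assumes "undirected_graph E" "0 \<le> \<beta>" "\<beta> * real CARD('n) \<le> 1/2"
  shows "(norm (y - \<beta> *\<^sub>R stacked_laplacian E (y::real^'d^'n::finite)))\<^sup>2
    \<le> (norm y)\<^sup>2 - \<beta> * dirichlet_form E y / 2"
proof -
  let ?L = "stacked_laplacian E y" and ?Q = "dirichlet_form E y"
  have "(norm (y - \<beta> *\<^sub>R ?L))\<^sup>2 = (norm y)\<^sup>2 - 2 * \<beta> * inner y ?L + \<beta>\<^sup>2 * (norm ?L)\<^sup>2"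
    by (simp only: power2_norm_eq_inner inner_diff_left inner_diff_right inner_scaleR_left
        inner_scaleR_right inner_commute[of ?L y]) (simp add: power2_eq_square algebra_simps)
  also have "\<dots> \<le> (norm y)\<^sup>2 - \<beta> * ?Q + \<beta>\<^sup>2 * (real CARD('n) * ?Q)"
    using inner_stacked_laplacian[OF assms(1), of y]
      mult_left_mono[OF norm_stacked_laplacian_sq[OF assms(1), of y], of "\<beta>\<^sup>2"]
    by (simp add: field_simps)
  also have "\<dots> = (norm y)\<^sup>2 - \<beta> * ?Q * (1 - \<beta> * real CARD('n))"
    by (simp add: power2_eq_square algebra_simps)
  also have "\<dots> \<le> (norm y)\<^sup>2 - \<beta> * ?Q / 2"
    using assms mult_left_mono[of "1/2" "1 - \<beta> * real CARD('n)" "\<beta> * ?Q"] dirichlet_form_nonneg[of E y]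
    by simp
  finally show ?thesis .
qed

lemma norm_consensus_step_le:
  assumes "undirected_graph E" "0 \<le> \<beta>" "\<beta> * real CARD('n) \<le> 1/2"
  shows "norm (y - \<beta> *\<^sub>R stacked_laplacian E (y::real^'d^'n::finite)) \<le> norm y"
proof -
  have "0 \<le> \<beta> * dirichlet_form E y"
    using assms(2) dirichlet_form_nonneg by (rule mult_nonneg_nonneg)
  then have "(norm (y - \<beta> *\<^sub>R stacked_laplacian E y))\<^sup>2 \<le> (norm y)\<^sup>2"
    using norm_consensus_step_sq[OF assms, of y] by linarith
  then show ?thesis by (rule power2_le_imp_le) simp
qed

lemma norm_consensus_step_contract:
  assumes "undirected_graph E" "0 \<le> \<beta>" "\<beta> * real CARD('n) \<le> 1/2" "\<beta> * \<mu> \<le> 1"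
    and gap: "\<mu> * (norm y)\<^sup>2 \<le> dirichlet_form E (y::real^'d^'n::finite)"
  shows "norm (y - \<beta> *\<^sub>R stacked_laplacian E y) \<le> (1 - \<beta> * \<mu> / 4) * norm y"
proof (rule power2_le_imp_le)
  have "(norm (y - \<beta> *\<^sub>R stacked_laplacian E y))\<^sup>2 \<le> (norm y)\<^sup>2 - \<beta> * dirichlet_form E y / 2"
    by (rule norm_consensus_step_sq[OF assms(1-3)])
  also have "\<dots> \<le> (norm y)\<^sup>2 - \<beta> * (\<mu> * (norm y)\<^sup>2) / 2"
    using mult_left_mono[OF gap assms(2)] by simp
  also have "\<dots> \<le> ((1 - \<beta> * \<mu> / 4) * norm y)\<^sup>2"
    using zero_le_power2[of "\<beta> * \<mu> * norm y / 4"] by (simp add: power2_eq_square algebra_simps)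
  finally show "(norm (y - \<beta> *\<^sub>R stacked_laplacian E y))\<^sup>2 \<le> ((1 - \<beta> * \<mu> / 4) * norm y)\<^sup>2" .
  show "0 \<le> (1 - \<beta> * \<mu> / 4) * norm y" using assms(4) by simp
qed

definition nodewise :: "('n::finite \<Rightarrow> 'a \<Rightarrow> 'b) \<Rightarrow> 'a^'n \<Rightarrow> 'b^'n" where
  "nodewise g z = (\<chi> n. g n (z $ n))"

lemma norm_nodewise_le:
  fixes g :: "'n::finite \<Rightarrow> 'a::real_normed_vector \<Rightarrow> 'a"
  assumes lip: "\<And>n. K-lipschitz_on UNIV (g n)" and K: "0 \<le> K"
  shows "norm (nodewise g z) \<le> K * norm z + norm (nodewise g 0)"
proof -
  have "norm (nodewise g z - nodewise g 0) \<le> norm (K *\<^sub>R z)"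
  proof (rule norm_le_componentwise_cart)
    fix n
    show "norm ((nodewise g z - nodewise g 0) $ n) \<le> norm ((K *\<^sub>R z) $ n)"
      using lipschitz_onD[OF lip[of n], of "z $ n" 0] K by (simp add: nodewise_def dist_norm)
  qed
  then show ?thesis using K norm_triangle_ineq2[of "nodewise g z" "nodewise g 0"] by simp
qed

text \<open>The gain \<open>1 + a\<^sup>2 K\<^sup>2\<close>, rather than the naive \<open>1 + a K\<close>, has a convergent product
  along step sizes \<open>a = c/t\<close>; this is where the outward gradient condition enters.\<close>

lemma norm_gradient_step_le:
  fixes g :: "'a::real_inner \<Rightarrow> 'a"
  assumes lip: "K-lipschitz_on UNIV g" and outward: "norm y \<ge> C1 \<Longrightarrow> inner y (g y) \<ge> 0"
    and a: "0 \<le> a" and K: "0 \<le> K" and C1: "0 \<le> C1"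
  shows "norm (y - a *\<^sub>R g y) \<le> (1 + a\<^sup>2 * K\<^sup>2) * norm y + a * (K * C1 + 2 * norm (g 0))"
proof -
  define r where "r = norm y"
  define g0 where "g0 = norm (g 0)"
  have r: "0 \<le> r" and g0: "0 \<le> g0" unfolding r_def g0_def by simp_all
  have g_le: "norm (g y) \<le> K * r + g0"
    using lipschitz_onD[OF lip, of y 0] norm_triangle_ineq2[of "g y" "g 0"]
    by (simp add: r_def g0_def dist_norm)
  show ?thesis
  proof (cases "r \<ge> C1")
    case True
    have "(norm (y - a *\<^sub>R g y))\<^sup>2 = r\<^sup>2 - 2 * a * inner y (g y) + a\<^sup>2 * (norm (g y))\<^sup>2"
      unfolding r_def
      by (simp only: power2_norm_eq_inner inner_diff_left inner_diff_right inner_scaleR_left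
          inner_scaleR_right inner_commute[of "g y" y]) (simp add: power2_eq_square algebra_simps)
    also have "\<dots> \<le> r\<^sup>2 + a\<^sup>2 * (K * r + g0)\<^sup>2"
      using outward[folded r_def, OF True] a g_le
      by (smt (verit) mult_left_mono mult_nonneg_nonneg norm_ge_zero power_mono zero_le_power2)
    also have "\<dots> \<le> r\<^sup>2 + a\<^sup>2 * (2 * K\<^sup>2 * r\<^sup>2 + 2 * g0\<^sup>2)"
      using zero_le_power2[of "K * r - g0"]
      by (intro add_left_mono mult_left_mono) (simp_all add: power2_eq_square algebra_simps)
    also have "\<dots> \<le> ((1 + a\<^sup>2 * K\<^sup>2) * r + a * (2 * g0))\<^sup>2"
    proof -
      have "0 \<le> (a\<^sup>2 * K\<^sup>2)\<^sup>2 * r\<^sup>2 + 4 * a * g0 * (1 + a\<^sup>2 * K\<^sup>2) * r + 2 * a\<^sup>2 * g0\<^sup>2"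
        using a g0 r by (intro add_nonneg_nonneg mult_nonneg_nonneg) auto
      then show ?thesis by (simp add: power2_eq_square algebra_simps)
    qed
    finally have "norm (y - a *\<^sub>R g y) \<le> (1 + a\<^sup>2 * K\<^sup>2) * r + a * (2 * g0)"
      by (rule power2_le_imp_le) (use a g0 r in simp)
    also have "\<dots> \<le> (1 + a\<^sup>2 * K\<^sup>2) * r + a * (K * C1 + 2 * g0)"
      using a K C1 by (intro add_left_mono mult_left_mono) auto
    finally show ?thesis by (simp add: r_def g0_def)
  next
    case False
    have "norm (y - a *\<^sub>R g y) \<le> r + a * norm (g y)"
      using norm_triangle_ineq4[of y "a *\<^sub>R g y"] a by (simp add: r_def)
    also have "\<dots> \<le> r + a * (K * C1 + g0)"
      using g_le mult_left_mono[of r C1 K] False K a by (intro add_left_mono mult_left_mono) auto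
    also have "\<dots> \<le> (1 + a\<^sup>2 * K\<^sup>2) * r + a * (K * C1 + 2 * g0)"
      using a g0 r K by (intro add_mono mult_left_mono) (simp_all add: algebra_simps)
    finally show ?thesis by (simp add: r_def g0_def)
  qed
qed

lemma norm_nodewise_gradient_step_le:
  fixes g :: "'n::finite \<Rightarrow> real^'d \<Rightarrow> real^'d"
  assumes lip: "\<And>n. K-lipschitz_on UNIV (g n)"
    and outward: "\<And>n y. norm y \<ge> C1 \<Longrightarrow> inner y (g n y) \<ge> 0"
    and a: "0 \<le> a" and K: "0 \<le> K" and C1: "0 \<le> C1"
  shows "norm (z - a *\<^sub>R nodewise g z)
    \<le> (1 + a\<^sup>2 * K\<^sup>2) * norm z + a * norm (\<chi> n. K * C1 + 2 * norm (g n 0))"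
proof -
  have "norm (z - a *\<^sub>R nodewise g z)
      \<le> norm ((1 + a\<^sup>2 * K\<^sup>2) *\<^sub>R (\<chi> n. norm (z $ n)) + a *\<^sub>R (\<chi> n. K * C1 + 2 * norm (g n 0)))"
  proof (rule norm_le_componentwise_cart)
    fix n
    have "0 \<le> K * C1 + 2 * norm (g n 0)" using K C1 by simp
    then show "norm ((z - a *\<^sub>R nodewise g z) $ n)
        \<le> norm (((1 + a\<^sup>2 * K\<^sup>2) *\<^sub>R (\<chi> n. norm (z $ n)) + a *\<^sub>R (\<chi> n. K * C1 + 2 * norm (g n 0))) $ n)"
      using norm_gradient_step_le[OF lip outward a K C1, of "z $ n"] a
      by (simp add: nodewise_def)
  qed
  also have "\<dots> \<le> (1 + a\<^sup>2 * K\<^sup>2) * norm (\<chi> n. norm (z $ n)) + a * norm (\<chi> n. K * C1 + 2 * norm (g n 0))"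
    by (rule order.trans[OF norm_triangle_ineq]) (use a in simp)
  also have "norm (\<chi> n. norm (z $ n)) = norm z"
    by (simp add: norm_vec_def)
  finally show ?thesis .
qed

lemma norm_iteration_step_le:
  fixes g :: "'n::finite \<Rightarrow> real^'d \<Rightarrow> real^'d"
  assumes und: "undirected_graph E" and lip: "\<And>n. K-lipschitz_on UNIV (g n)"
    and outward: "\<And>n y. norm y \<ge> C1 \<Longrightarrow> inner y (g n y) \<ge> 0"
    and K: "0 \<le> K" and C1: "0 \<le> C1"
    and a: "0 \<le> a" and b: "0 \<le> b" "b * real CARD('n) \<le> 1/2"
  shows "norm (z - b *\<^sub>R stacked_laplacian E z - a *\<^sub>R nodewise g z + v)
    \<le> (1 + (a\<^sup>2 * K\<^sup>2 + 2 * real CARD('n) * K * (a * b))) * norm z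
      + a * (norm (\<chi> n. K * C1 + 2 * norm (g n 0)) + 2 * real CARD('n) * norm (nodewise g 0))
      + norm v"
proof -
  \<comment> \<open>Apply the nonexpansive consensus step to \<open>y = z - a g(z)\<close>;
    the correction \<open>a b L g(z)\<close> is of second order.\<close>
  define N where "N = real CARD('n)"
  define y where "y = z - a *\<^sub>R nodewise g z"
  have N: "1 \<le> N" unfolding N_def by simp
  have b_le_1: "b \<le> 1" using b mult_left_mono[OF N, of b] unfolding N_def by linarith
  have "z - b *\<^sub>R stacked_laplacian E z - a *\<^sub>R nodewise g z + v
      = (y - b *\<^sub>R stacked_laplacian E y) - (a * b) *\<^sub>R stacked_laplacian E (nodewise g z) + v"
    unfolding y_def
    by (simp add: linear_diff[OF linear_kron_laplacian] linear_cmul[OF linear_kron_laplacian]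
        algebra_simps)
  also have "norm \<dots> \<le> norm (y - b *\<^sub>R stacked_laplacian E y)
      + a * b * norm (stacked_laplacian E (nodewise g z)) + norm v"
    using a b
    by (intro order.trans[OF norm_triangle_ineq] add_right_mono order.trans[OF norm_triangle_ineq4])
      simp_all
  also have "norm (y - b *\<^sub>R stacked_laplacian E y)
      \<le> (1 + a\<^sup>2 * K\<^sup>2) * norm z + a * norm (\<chi> n. K * C1 + 2 * norm (g n 0))"
    using norm_consensus_step_le[OF und b, of y]
      norm_nodewise_gradient_step_le[where g = g and z = z, OF lip outward a K C1]
    unfolding y_def by linarith
  also have "a * b * norm (stacked_laplacian E (nodewise g z))
      \<le> a * b * (2 * N * (K * norm z + norm (nodewise g 0)))"
    using norm_stacked_laplacian_le[OF und, of "nodewise g z"]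
      norm_nodewise_le[where g = g and z = z, OF lip K] a b N
    unfolding N_def by (intro mult_left_mono) (auto intro: order.trans mult_left_mono)
  also have "\<dots> \<le> 2 * N * K * (a * b) * norm z + a * (2 * N * norm (nodewise g 0))"
    using mult_right_mono[OF b_le_1, of "a * (2 * N * norm (nodewise g 0))"] a N
    by (simp add: algebra_simps)
  finally show ?thesis by (simp add: N_def algebra_simps)
qed

lemma norm_disagreement_step_le:
  fixes g :: "'n::finite \<Rightarrow> real^'d \<Rightarrow> real^'d"
  assumes und: "undirected_graph E" and lip: "\<And>n. K-lipschitz_on UNIV (g n)" and K: "0 \<le> K"
    and a: "0 \<le> a" and b: "0 \<le> b" "b * real CARD('n) \<le> 1/2" "b * \<mu> \<le> 1"
    and gap: "\<mu> * (norm (disagreement z))\<^sup>2 \<le> dirichlet_form E (disagreement z)"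
  shows "norm (disagreement (z - b *\<^sub>R stacked_laplacian E z - a *\<^sub>R nodewise g z + v))
    \<le> (1 - b * \<mu> / 4) * norm (disagreement z) + a * (K * norm z + norm (nodewise g 0)) + norm v"
proof -
  let ?P = disagreement
  have "?P (z - b *\<^sub>R stacked_laplacian E z - a *\<^sub>R nodewise g z + v)
      = (?P z - b *\<^sub>R stacked_laplacian E (?P z)) - a *\<^sub>R ?P (nodewise g z) + ?P v"
    by (simp add: linear_add[OF linear_disagreement] linear_diff[OF linear_disagreement]
        linear_cmul[OF linear_disagreement] disagreement_stacked_laplacian[OF und])
  also have "norm \<dots> \<le> norm (?P z - b *\<^sub>R stacked_laplacian E (?P z)) + a * norm (?P (nodewise g z))
      + norm (?P v)"
    using a
    by (intro order.trans[OF norm_triangle_ineq] add_right_mono order.trans[OF norm_triangle_ineq4])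
      simp_all
  also have "\<dots> \<le> (1 - b * \<mu> / 4) * norm (?P z) + a * (K * norm z + norm (nodewise g 0)) + norm v"
    using norm_consensus_step_contract[OF und b gap] norm_disagreement_le[of "nodewise g z"]
      norm_nodewise_le[where g = g and z = z, OF lip K] norm_disagreement_le[of v] a
    by (smt (verit) mult_left_mono)
  finally show ?thesis .
qed

lemma discrete_gronwall:
  fixes u a b :: "nat \<Rightarrow> real"
  assumes rec: "\<And>s. u (Suc s) \<le> (1 + a s) * u s + b s"
    and a: "\<And>s. 0 \<le> a s" and b: "\<And>s. 0 \<le> b s" and u0: "0 \<le> u 0"
  shows "u t \<le> exp (\<Sum>s<t. a s) * (u 0 + (\<Sum>s<t. b s))"
proof (induction t)
  case 0
  then show ?case by simp
next
  case (Suc t)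
  let ?A = "\<Sum>s<t. a s" and ?B = "u 0 + (\<Sum>s<t. b s)"
  have B: "0 \<le> ?B" using u0 b by (simp add: sum_nonneg)
  have "1 \<le> exp (?A + a t)" using a by (simp add: sum_nonneg)
  then have b_le: "b t \<le> exp (?A + a t) * b t" using b[of t] by (simp add: mult_le_cancel_right1)
  have "u (Suc t) \<le> (1 + a t) * (exp ?A * ?B) + b t"
    using rec[of t] Suc a[of t] by (smt (verit) mult_left_mono)
  also have "\<dots> \<le> exp (a t) * (exp ?A * ?B) + exp (?A + a t) * b t"
    using exp_ge_add_one_self[of "a t"] B b_le by (intro add_mono mult_right_mono) simp_all
  also have "\<dots> = exp (\<Sum>s<Suc t. a s) * (u 0 + (\<Sum>s<Suc t. b s))"
    by (simp add: exp_add algebra_simps)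
  finally show ?case .
qed

lemma sum_inverse_sqrt_le: "(\<Sum>k<n. 1 / sqrt (real (Suc k))) \<le> 2 * sqrt (real n)"
proof (induction n)
  case 0
  then show ?case by simp
next
  case (Suc n)
  define s where "s = sqrt (real (Suc n))"
  have s: "1 \<le> s" "sqrt (real n) \<le> s" unfolding s_def by simp_all
  have "1 / s \<le> 2 * (s - sqrt (real n))"
  proof -
    have "(sqrt (real n))\<^sup>2 = s\<^sup>2 - 1" unfolding s_def by simp
    then have "1 = (s - sqrt (real n)) * (s + sqrt (real n))" by (simp add: power2_eq_square algebra_simps)
    also have "\<dots> \<le> (s - sqrt (real n)) * (2 * s)" using s by (intro mult_left_mono) simp_all
    finally show ?thesis using s by (simp add: pos_divide_le_eq mult_ac)
  qed
  then show ?case using Suc by (simp add: s_def)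
qed

lemma sum_shifted_powr_le:
  assumes T: "1 \<le> T" and e: "0 \<le> e"
  shows "(\<Sum>s<m. real (s + T) powr (e - 1/2)) \<le> 2 * real (T + m) powr (1/2 + e)"
proof -
  have "real (s + T) powr (e - 1/2) \<le> real (T + m) powr e * (1 / sqrt (real (Suc s)))" if "s < m" for s
  proof -
    have "real (s + T) powr (e - 1/2) = real (s + T) powr e / sqrt (real (s + T))"
      using T by (simp add: powr_diff powr_half_sqrt)
    also have "\<dots> \<le> real (T + m) powr e / sqrt (real (Suc s))"
      using that T e by (intro frac_le powr_mono2) simp_all
    finally show ?thesis by simp
  qed
  then have "(\<Sum>s<m. real (s + T) powr (e - 1/2)) \<le> real (T + m) powr e * (\<Sum>s<m. 1 / sqrt (real (Suc s)))"
    unfolding sum_distrib_left by (intro sum_mono) auto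
  also have "\<dots> \<le> real (T + m) powr e * (2 * sqrt (real (T + m)))"
  proof -
    have "sqrt (real m) \<le> sqrt (real (T + m))" by simp
    then have "(\<Sum>s<m. 1 / sqrt (real (Suc s))) \<le> 2 * sqrt (real (T + m))"
      using sum_inverse_sqrt_le[of m] by linarith
    then show ?thesis by (intro mult_left_mono) simp_all
  qed
  also have "\<dots> = 2 * real (T + m) powr (1/2 + e)"
    using T by (simp add: powr_add powr_half_sqrt)
  finally show ?thesis .
qed

lemma recursive_ineq_growth_powr:
  fixes u a :: "nat \<Rightarrow> real"
  assumes rec: "\<And>t. t \<ge> T \<Longrightarrow> u (Suc t) \<le> (1 + a t) * u t + D * real t powr (e - 1/2)"
    and a: "\<And>t. 0 \<le> a t" "summable a" and u: "\<And>t. 0 \<le> u t"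
    and D: "0 \<le> D" and e: "0 \<le> e" and T: "1 \<le> T"
  obtains C where "0 \<le> C" "\<And>t. t \<ge> T \<Longrightarrow> u t \<le> C * real t powr (1/2 + e)"
proof
  define A where "A = (\<Sum>s. a (s + T))"
  have A: "(\<Sum>s<m. a (s + T)) \<le> A" for m
    unfolding A_def using a summable_ignore_initial_segment[OF a(2), of T]
    by (intro sum_le_suminf) auto
  show "0 \<le> exp A * (u T + 2 * D)" using u D by simp
  fix t assume "t \<ge> T"
  then obtain m where t: "t = T + m" using le_Suc_ex by blast
  have "u (Suc s + T) \<le> (1 + a (s + T)) * u (s + T) + D * real (s + T) powr (e - 1/2)" for s
    using rec[of "s + T"] by simp
  from discrete_gronwall[where u = "\<lambda>s. u (s + T)", OF this, of m]
  have "u t \<le> exp (\<Sum>s<m. a (s + T)) * (u T + D * (\<Sum>s<m. real (s + T) powr (e - 1/2)))"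
    using a(1) u D unfolding t by (simp add: add.commute sum_distrib_left)
  also have "\<dots> \<le> exp A * (u T + D * (2 * real t powr (1/2 + e)))"
    using sum_shifted_powr_le[OF T e, of m] A u D unfolding t
    by (intro mult_mono add_left_mono mult_left_mono) (simp_all add: sum_nonneg)
  also have "\<dots> \<le> exp A * (u T * real t powr (1/2 + e) + 2 * D * real t powr (1/2 + e))"
    using mult_left_mono[OF ge_one_powr_ge_zero[of t "1/2 + e"] u[of T]] e T unfolding t
    by (intro mult_left_mono add_right_mono) simp_all
  finally show "u t \<le> exp A * (u T + 2 * D) * real t powr (1/2 + e)"
    by (simp add: algebra_simps)
qed

lemma powr_neg_mult_one_minus_le:
  fixes t r :: real
  assumes "1 \<le> t" "0 \<le> r" "r < t"
  shows "t powr (-r) * (1 - r / t) \<le> (t + 1) powr (-r)"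
proof -
  have pos: "0 < 1 - r / t" using assms by (simp add: field_simps)
  have "ln (1 - r / t) \<le> - r * (1 / t)" using ln_le_minus_one[OF pos] by simp
  also have "\<dots> \<le> - r * ln (1 + 1 / t)"
    using ln_le_minus_one[of "1 + 1 / t"] assms by (intro mult_left_mono_neg) (simp_all add: add_pos_nonneg)
  also have "\<dots> = ln ((t + 1) powr (-r)) - ln (t powr (-r))"
    using assms by (simp add: ln_powr ln_div field_simps)
  finally have "ln (t powr (-r) * (1 - r / t)) \<le> ln ((t + 1) powr (-r))"
    using assms pos by (simp add: ln_mult)
  then show ?thesis using assms pos by (subst (asm) ln_le_cancel_iff) simp_all
qed

lemma recursive_ineq_powr_step:
  fixes t u A D :: real
  assumes t: "1 \<le> t" "r < t" and r: "0 \<le> r" and cX: "c * t powr (-p) \<le> 1"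
    and small: "r * t powr (p - 1) \<le> c / 2" and A: "0 \<le> A" "D \<le> A * c / 2"
    and u: "u \<le> A * t powr (-r)"
  shows "(1 - c * t powr (-p)) * u + D * t powr (-(p + r)) \<le> A * (t + 1) powr (-r)"
proof -
  define X where "X = t powr (-p)"
  define Y where "Y = t powr (-r)"
  have XY: "t powr (-(p + r)) = X * Y"
    unfolding X_def Y_def by (simp add: powr_add[symmetric])
  have "t powr (p - 1) * X = t powr (-1)"
    unfolding X_def by (simp add: powr_add[symmetric])
  then have rt: "r / t = r * t powr (p - 1) * X"
    using t by (simp add: powr_minus_divide mult.assoc)
  have "(1 - c * X) * u + D * (X * Y) \<le> (1 - c * X) * (A * Y) + D * (X * Y)"
    using mult_left_mono[OF u, of "1 - c * X"] cX unfolding X_def Y_def by simp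
  also have "\<dots> \<le> A * Y * (1 - r / t)"
  proof -
    have "D + A * (r * t powr (p - 1)) \<le> A * c"
      using A mult_left_mono[OF small A(1)] by linarith
    then have "X * Y * (D + A * (r * t powr (p - 1))) \<le> X * Y * (A * c)"
      unfolding X_def Y_def by (intro mult_left_mono) auto
    then show ?thesis unfolding rt by (simp add: algebra_simps)
  qed
  also have "\<dots> \<le> A * (t + 1) powr (-r)"
    using powr_neg_mult_one_minus_le[OF t(1) r t(2)] A(1)
    unfolding Y_def by (simp add: mult.assoc mult_left_mono)
  finally show ?thesis unfolding XY X_def .
qed

lemma recursive_ineq_decay_powr:
  fixes u :: "nat \<Rightarrow> real"
  assumes rec: "\<And>t. t \<ge> T \<Longrightarrow> u (Suc t) \<le> (1 - c * real t powr (-p)) * u t + D * real t powr (-q)"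
    and c: "0 < c" and D: "0 \<le> D" and p: "0 < p" "p < 1" and pq: "p < q"
  obtains A T' where "\<And>t. t \<ge> T' \<Longrightarrow> u t \<le> A * real t powr (p - q)"
proof -
  define r where "r = q - p"
  have r: "0 < r" using pq by (simp add: r_def)
  have "((\<lambda>t. real t powr (-p)) \<longlongrightarrow> 0) sequentially"
    "((\<lambda>t. real t powr (p - 1)) \<longlongrightarrow> 0) sequentially"
    using p by (intro tendsto_neg_powr filterlim_real_sequentially; simp)+
  then have "eventually (\<lambda>t. real t powr (-p) < 1 / c) sequentially"
    "eventually (\<lambda>t. real t powr (p - 1) < c / (2 * r)) sequentially"
    using c r by (simp_all add: order_tendstoD(2))
  moreover have "eventually (\<lambda>t. r + 1 + real T \<le> real t) sequentially"
    using filterlim_real_sequentially by (simp add: filterlim_at_top)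
  ultimately have "eventually (\<lambda>t. c * real t powr (-p) \<le> 1 \<and> r * real t powr (p - 1) \<le> c / 2
      \<and> r + 1 + real T \<le> real t) sequentially"
    by eventually_elim (use c r in \<open>simp add: field_simps\<close>)
  then obtain T1 where T1: "\<And>t. t \<ge> T1 \<Longrightarrow> c * real t powr (-p) \<le> 1
      \<and> r * real t powr (p - 1) \<le> c / 2 \<and> r + 1 + real T \<le> real t"
    unfolding eventually_sequentially by blast
  define A where "A = max (u T1 * real T1 powr r) (2 * D / c)"
  have "2 * D / c \<le> A" unfolding A_def by simp
  then have A: "0 \<le> A" "D \<le> A * c / 2"
    using c D by (simp_all add: field_simps order.trans[OF divide_nonneg_pos])
  have "u t \<le> A * real t powr (-r)" if "t \<ge> T1" for t
    using that
  proof (induction t rule: dec_induct)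
    case base
    have "1 \<le> real T1" using T1[of T1] r by simp
    then show ?case
      unfolding A_def by (simp add: powr_minus field_simps max_def)
  next
    case (step t)
    have t: "t \<ge> T" "1 \<le> real t" "r < real t" "c * real t powr (-p) \<le> 1"
      "r * real t powr (p - 1) \<le> c / 2"
      using T1[OF step(1)] r by auto
    have "u (Suc t) \<le> (1 - c * real t powr (-p)) * u t + D * real t powr (-(p + r))"
      using rec[OF t(1)] by (simp add: r_def)
    also have "\<dots> \<le> A * (real t + 1) powr (-r)"
      using r by (intro recursive_ineq_powr_step[OF t(2,3) _ t(4,5) A step(3)]) simp
    finally show ?case by (simp add: add.commute)
  qed
  then show thesis using that[of T1 A] by (simp add: r_def)
qed

lemma recursive_ineq_powr_tendsto_zero:
  fixes u :: "nat \<Rightarrow> real"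
  assumes rec: "\<And>t. t \<ge> T \<Longrightarrow> u (Suc t) \<le> (1 - c * real t powr (-p)) * u t + D * real t powr (-q)"
    and u: "\<And>t. 0 \<le> u t" and c: "0 < c" and D: "0 \<le> D" and p: "0 < p" "p < 1"
    and \<tau>: "0 \<le> \<tau>" "\<tau> < q - p"
  shows "(\<lambda>t. real t powr \<tau> * u t) \<longlonglongrightarrow> 0"
proof -
  have "p < q" using \<tau> by simp
  then obtain A T' where A: "\<And>t. t \<ge> T' \<Longrightarrow> u t \<le> A * real t powr (p - q)"
    using recursive_ineq_decay_powr[OF rec c D p] by blast
  have "(\<lambda>t. A * real t powr (\<tau> + (p - q))) \<longlonglongrightarrow> 0"
    using \<tau> by (intro tendsto_mult_right_zero tendsto_neg_powr filterlim_real_sequentially) simp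
  moreover have "eventually (\<lambda>t. real t powr \<tau> * u t \<le> A * real t powr (\<tau> + (p - q))) sequentially"
    unfolding eventually_sequentially
  proof (intro exI allI impI)
    fix t assume "t \<ge> T'"
    then have "real t powr \<tau> * u t \<le> real t powr \<tau> * (A * real t powr (p - q))"
      using A by (intro mult_left_mono) simp_all
    then show "real t powr \<tau> * u t \<le> A * real t powr (\<tau> + (p - q))"
      by (simp add: powr_add mult_ac)
  qed
  ultimately show ?thesis
    using u by (rule_tac tendsto_sandwich[OF _ _ tendsto_const]) simp_all
qed

locale consensus_gradient_iteration =
  fixes E :: "'n::finite \<Rightarrow> 'n \<Rightarrow> bool" and g :: "'n \<Rightarrow> real^'d \<Rightarrow> real^'d"
    and K C1 :: real and \<alpha> \<beta> :: "nat \<Rightarrow> real" and x v :: "nat \<Rightarrow> real^'d^'n"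
  assumes undirected: "undirected_graph E" and connected: "connected_graph E"
    and lipschitz: "\<And>n. K-lipschitz_on UNIV (g n)" and K: "0 \<le> K"
    and outward: "\<And>n y. norm y \<ge> C1 \<Longrightarrow> inner y (g n y) \<ge> 0" and C1: "0 \<le> C1"
    and iteration: "\<And>t. x (Suc t)
      = x t - \<beta> t *\<^sub>R stacked_laplacian E (x t) - \<alpha> t *\<^sub>R nodewise g (x t) + v t"
begin

lemma norm_iterate_le_powr:
  assumes T: "1 \<le> T"
    and \<alpha>: "\<And>t. t \<ge> T \<Longrightarrow> \<alpha> t = c\<^sub>\<alpha> * real t powr (-1)"
    and \<beta>: "\<And>t. t \<ge> T \<Longrightarrow> \<beta> t = c\<^sub>\<beta> * real t powr (-\<tau>\<^sub>\<beta>)"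
    and \<beta>_small: "\<And>t. t \<ge> T \<Longrightarrow> \<beta> t * real CARD('n) \<le> 1/2"
    and v: "\<And>t. t \<ge> T \<Longrightarrow> norm (v t) \<le> D * real t powr (e - 1/2)"
    and c: "0 \<le> c\<^sub>\<alpha>" "0 \<le> c\<^sub>\<beta>" and \<tau>\<^sub>\<beta>: "0 < \<tau>\<^sub>\<beta>" and D: "0 \<le> D" and e: "0 \<le> e"
  obtains C where "0 \<le> C" "\<And>t. t \<ge> T \<Longrightarrow> norm (x t) \<le> C * real t powr (1/2 + e)"
proof -
  define N where "N = real CARD('n)"
  define a where "a t = (K * c\<^sub>\<alpha>)\<^sup>2 * real t powr (-2) + 2 * N * K * c\<^sub>\<alpha> * c\<^sub>\<beta> * real t powr (-(1 + \<tau>\<^sub>\<beta>))"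
    for t
  define C0 where "C0 = norm (\<chi> n. K * C1 + 2 * norm (g n 0)) + 2 * N * norm (nodewise g 0)"
  have a: "0 \<le> a t" for t unfolding a_def N_def using K c by simp
  have sa: "summable a"
    unfolding a_def using \<tau>\<^sub>\<beta> by (intro summable_add summable_mult) (simp_all add: summable_real_powr_iff)
  have "0 \<le> c\<^sub>\<alpha> * C0 + D" unfolding C0_def N_def using c D by simp
  moreover have "norm (x (Suc t)) \<le> (1 + a t) * norm (x t) + (c\<^sub>\<alpha> * C0 + D) * real t powr (e - 1/2)"
    if t: "t \<ge> T" for t
  proof -
    have "real t powr (-2) = (real t powr (-1))\<^sup>2"
      "real t powr (-(1 + \<tau>\<^sub>\<beta>)) = real t powr (-1) * real t powr (-\<tau>\<^sub>\<beta>)"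
      unfolding power2_eq_square powr_add[symmetric] by simp_all
    then have a_eq: "(\<alpha> t)\<^sup>2 * K\<^sup>2 + 2 * real CARD('n) * K * (\<alpha> t * \<beta> t) = a t"
      unfolding a_def \<alpha>[OF t] \<beta>[OF t] N_def by (simp only: power_mult_distrib) (simp add: algebra_simps)
    have "0 \<le> \<alpha> t" "0 \<le> \<beta> t" using c unfolding \<alpha>[OF t] \<beta>[OF t] by simp_all
    from norm_iteration_step_le[OF undirected lipschitz outward K C1 this \<beta>_small[OF t]]
    have "norm (x (Suc t)) \<le> (1 + a t) * norm (x t) + \<alpha> t * C0 + norm (v t)"
      unfolding iteration[of t] a_eq C0_def N_def .
    moreover have "\<alpha> t * C0 \<le> c\<^sub>\<alpha> * C0 * real t powr (e - 1/2)"
    proof -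
      have "real t powr (-1) \<le> real t powr (e - 1/2)" using t T e by (intro powr_mono) simp_all
      moreover have "0 \<le> c\<^sub>\<alpha> * C0" unfolding C0_def N_def using c by simp
      ultimately show ?thesis unfolding \<alpha>[OF t] by (metis mult_left_mono mult.commute mult.left_commute)
    qed
    ultimately show ?thesis using v[OF t] by (simp add: algebra_simps)
  qed
  ultimately show thesis
    using recursive_ineq_growth_powr[where u = "\<lambda>t. norm (x t)", OF _ a sa norm_ge_zero _ e T] that
    by blast
qed

lemma norm_disagreement_recursive_ineq:
  assumes gap: "\<And>y::real^'d^'n. (\<Sum>n\<in>UNIV. y $ n) = 0 \<Longrightarrow> \<mu> * (norm y)\<^sup>2 \<le> dirichlet_form E y"
    and T: "1 \<le> T"
    and \<alpha>: "\<And>t. t \<ge> T \<Longrightarrow> \<alpha> t = c\<^sub>\<alpha> * real t powr (-1)"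
    and \<beta>: "\<And>t. t \<ge> T \<Longrightarrow> \<beta> t = c\<^sub>\<beta> * real t powr (-\<tau>\<^sub>\<beta>)"
    and \<beta>_small: "\<And>t. t \<ge> T \<Longrightarrow> \<beta> t * real CARD('n) \<le> 1/2" "\<And>t. t \<ge> T \<Longrightarrow> \<beta> t * \<mu> \<le> 1"
    and v: "\<And>t. t \<ge> T \<Longrightarrow> norm (v t) \<le> D * real t powr (e - 1/2)"
    and x: "\<And>t. t \<ge> T \<Longrightarrow> norm (x t) \<le> C * real t powr (1/2 + e)"
    and c: "0 \<le> c\<^sub>\<alpha>" "0 \<le> c\<^sub>\<beta>" "0 \<le> C" and e: "0 \<le> e" and t: "t \<ge> T"
  shows "norm (disagreement (x (Suc t))) \<le> (1 - \<mu> * c\<^sub>\<beta> / 4 * real t powr (-\<tau>\<^sub>\<beta>)) * norm (disagreement (x t))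
    + (c\<^sub>\<alpha> * (K * C + norm (nodewise g 0)) + D) * real t powr (-(1/2 - e))"
proof -
  define G0 where "G0 = norm (nodewise g 0)"
  have t1: "1 \<le> real t" using t T by simp
  have "0 \<le> \<alpha> t" "0 \<le> \<beta> t" using c unfolding \<alpha>[OF t] \<beta>[OF t] by simp_all
  from norm_disagreement_step_le[OF undirected lipschitz K this \<beta>_small[OF t] gap[OF sum_disagreement]]
  have "norm (disagreement (x (Suc t)))
      \<le> (1 - \<beta> t * \<mu> / 4) * norm (disagreement (x t)) + \<alpha> t * (K * norm (x t) + G0) + norm (v t)"
    unfolding iteration[of t] G0_def .
  moreover have "\<alpha> t * (K * norm (x t) + G0) \<le> c\<^sub>\<alpha> * (K * C + G0) * real t powr (e - 1/2)"
  proof -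
    have "K * norm (x t) + G0 \<le> K * (C * real t powr (1/2 + e)) + G0 * real t powr (1/2 + e)"
      using mult_left_mono[OF x[OF t] K] mult_left_mono[OF ge_one_powr_ge_zero[OF t1, of "1/2 + e"], of G0] e
      unfolding G0_def by simp
    then have "\<alpha> t * (K * norm (x t) + G0)
        \<le> \<alpha> t * (K * (C * real t powr (1/2 + e)) + G0 * real t powr (1/2 + e))"
      using \<open>0 \<le> \<alpha> t\<close> by (rule mult_left_mono)
    also have "\<dots> = c\<^sub>\<alpha> * (K * C + G0) * (real t powr (-1) * real t powr (1/2 + e))"
      unfolding \<alpha>[OF t] by (simp add: algebra_simps add_divide_distrib)
    also have "real t powr (-1) * real t powr (1/2 + e) = real t powr (e - 1/2)"
      unfolding powr_add[symmetric] by simp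
    finally show ?thesis .
  qed
  ultimately show ?thesis using v[OF t] unfolding \<beta>[OF t] G0_def by (simp add: algebra_simps)
qed

lemma disagreement_tendsto_zero:
  assumes steps: "eventually (\<lambda>t. \<alpha> t = c\<^sub>\<alpha> / real t \<and> \<beta> t = c\<^sub>\<beta> / real t powr \<tau>\<^sub>\<beta>) sequentially"
    and c: "0 \<le> c\<^sub>\<alpha>" "0 < c\<^sub>\<beta>" and \<tau>\<^sub>\<beta>: "0 < \<tau>\<^sub>\<beta>"
    and noise: "eventually (\<lambda>t. norm (v t) \<le> D * real t powr (e - 1/2)) sequentially"
    and D: "0 \<le> D" and e: "0 \<le> e" and \<tau>: "0 \<le> \<tau>" "\<tau> < 1/2 - \<tau>\<^sub>\<beta> - e"
  shows "(\<lambda>t. real t powr \<tau> * norm (disagreement (x t))) \<longlonglongrightarrow> 0"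
proof -
  obtain \<mu> where \<mu>: "\<mu> > 0"
    and gap: "\<And>y::real^'d^'n. (\<Sum>n\<in>UNIV. y $ n) = 0 \<Longrightarrow> \<mu> * (norm y)\<^sup>2 \<le> dirichlet_form E y"
    using connected_graph_spectral_gap[OF connected] by blast
  define N where "N = real CARD('n)"
  have N: "0 < N" unfolding N_def by simp
  have "(\<lambda>t. c\<^sub>\<beta> * real t powr (-\<tau>\<^sub>\<beta>)) \<longlonglongrightarrow> 0"
    using \<tau>\<^sub>\<beta> by (intro tendsto_mult_right_zero tendsto_neg_powr filterlim_real_sequentially) simp
  then have "eventually (\<lambda>t. c\<^sub>\<beta> * real t powr (-\<tau>\<^sub>\<beta>) < min (1 / (2 * N)) (1 / \<mu>)) sequentially"
    using N \<mu> by (intro order_tendstoD(2)) auto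
  with steps noise eventually_ge_at_top[of 1]
  have "eventually (\<lambda>t. 1 \<le> t \<and> \<alpha> t = c\<^sub>\<alpha> * real t powr (-1) \<and> \<beta> t = c\<^sub>\<beta> * real t powr (-\<tau>\<^sub>\<beta>)
      \<and> \<beta> t * N \<le> 1/2 \<and> \<beta> t * \<mu> \<le> 1 \<and> norm (v t) \<le> D * real t powr (e - 1/2)) sequentially"
    by eventually_elim (use N \<mu> in \<open>auto simp: powr_minus_divide field_simps\<close>)
  then obtain T where T: "1 \<le> T" and \<alpha>: "\<And>t. t \<ge> T \<Longrightarrow> \<alpha> t = c\<^sub>\<alpha> * real t powr (-1)"
    and \<beta>: "\<And>t. t \<ge> T \<Longrightarrow> \<beta> t = c\<^sub>\<beta> * real t powr (-\<tau>\<^sub>\<beta>)"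
    and \<beta>_small: "\<And>t. t \<ge> T \<Longrightarrow> \<beta> t * real CARD('n) \<le> 1/2" "\<And>t. t \<ge> T \<Longrightarrow> \<beta> t * \<mu> \<le> 1"
    and v: "\<And>t. t \<ge> T \<Longrightarrow> norm (v t) \<le> D * real t powr (e - 1/2)"
    unfolding eventually_sequentially N_def by (metis order.refl)
  obtain C where C: "0 \<le> C" "\<And>t. t \<ge> T \<Longrightarrow> norm (x t) \<le> C * real t powr (1/2 + e)"
    using norm_iterate_le_powr[OF T \<alpha> \<beta> \<beta>_small(1) v c(1) less_imp_le[OF c(2)] \<tau>\<^sub>\<beta> D e] by blast
  note rec = norm_disagreement_recursive_ineq[OF gap T \<alpha> \<beta> \<beta>_small v C(2) c(1) less_imp_le[OF c(2)] C(1) e]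
  have "0 \<le> c\<^sub>\<alpha> * (K * C + norm (nodewise g 0)) + D" using c K C(1) D by simp
  from recursive_ineq_powr_tendsto_zero[where T = T and \<tau> = \<tau> and c = "\<mu> * c\<^sub>\<beta> / 4" and p = \<tau>\<^sub>\<beta>
      and q = "1/2 - e", OF rec norm_ge_zero _ this]
  show ?thesis using \<mu> c \<tau>\<^sub>\<beta> \<tau> e by simp
qed

end

lemma step_noise_le_powr:
  fixes \<xi> w :: "nat \<Rightarrow> 'v::real_normed_vector"
  assumes steps: "eventually (\<lambda>t. \<alpha> t = c\<^sub>\<alpha> / real t
      \<and> \<gamma> t = c\<^sub>\<gamma> / (sqrt (real t) * sqrt (ln (ln (real t))))) sequentially"
    and \<xi>: "eventually (\<lambda>t. norm (\<xi> t) \<le> real t powr (1/2 + e)) sequentially"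
    and w: "eventually (\<lambda>t. norm (w t) \<le> C\<^sub>w * ln (real t)) sequentially"
    and c: "0 \<le> c\<^sub>\<alpha>" "0 \<le> c\<^sub>\<gamma>" "0 \<le> C\<^sub>w" and e: "0 < e"
  shows "eventually (\<lambda>t. norm (\<gamma> t *\<^sub>R w t - \<alpha> t *\<^sub>R \<xi> t) \<le> (c\<^sub>\<alpha> + c\<^sub>\<gamma> * C\<^sub>w / e) * real t powr (e - 1/2))
    sequentially"
proof -
  have "filterlim (\<lambda>t. ln (ln (real t))) at_top sequentially"
    by (intro filterlim_compose[OF ln_at_top] filterlim_real_sequentially)
  then have "eventually (\<lambda>t. 1 \<le> ln (ln (real t))) sequentially"
    by (simp add: filterlim_at_top)
  with steps \<xi> w eventually_ge_at_top[of 1] show ?thesis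
  proof eventually_elim
    case (elim t)
    then have t: "1 \<le> real t" by simp
    have "\<alpha> t * norm (\<xi> t) \<le> c\<^sub>\<alpha> * (real t powr (-1) * real t powr (1/2 + e))"
      using elim c t by (simp add: powr_minus_divide divide_right_mono mult_left_mono)
    also have "\<dots> = c\<^sub>\<alpha> * real t powr (e - 1/2)"
      unfolding powr_add[symmetric] by simp
    finally have \<alpha>\<xi>: "\<alpha> t * norm (\<xi> t) \<le> c\<^sub>\<alpha> * real t powr (e - 1/2)" .
    have "\<gamma> t \<le> c\<^sub>\<gamma> * real t powr (-1/2)"
      using elim c t by (simp add: powr_minus_divide powr_half_sqrt frac_le)
    moreover have "norm (w t) \<le> C\<^sub>w * (real t powr e / e)"
      using elim ln_powr_bound[OF t e] c by (meson mult_left_mono order.trans)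
    moreover have "0 \<le> \<gamma> t" using elim c by simp
    ultimately have "\<gamma> t * norm (w t) \<le> c\<^sub>\<gamma> * real t powr (-1/2) * (C\<^sub>w * (real t powr e / e))"
      by (intro mult_mono) simp_all
    also have "\<dots> = c\<^sub>\<gamma> * C\<^sub>w / e * (real t powr (-1/2) * real t powr e)"
      by simp
    also have "real t powr (-1/2) * real t powr e = real t powr (e - 1/2)"
      unfolding powr_add[symmetric] by simp
    finally have "\<gamma> t * norm (w t) \<le> c\<^sub>\<gamma> * C\<^sub>w / e * real t powr (e - 1/2)" .
    moreover have "0 \<le> \<alpha> t" using elim c by simp
    ultimately show ?case
      using \<alpha>\<xi> norm_triangle_ineq4[of "\<gamma> t *\<^sub>R w t" "\<alpha> t *\<^sub>R \<xi> t"] \<open>0 \<le> \<gamma> t\<close>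
      by (simp add: algebra_simps)
  qed
qed


theorem consensus_rate_of_noise_growth:
  fixes g :: "'n::finite \<Rightarrow> real^'d \<Rightarrow> real^'d" and x \<xi> w :: "nat \<Rightarrow> real^'d^'n"
  assumes graph: "undirected_graph E" "connected_graph E"
    and lipschitz: "\<And>n. K-lipschitz_on UNIV (g n)" "0 \<le> K"
    and outward: "\<And>n y. norm y \<ge> C1 \<Longrightarrow> inner y (g n y) \<ge> 0" "0 \<le> C1"
    and recursion: "\<And>t. x (Suc t) = x t - \<beta> t *\<^sub>R kron_laplacian (graph_laplacian E) (x t)
      - \<alpha> t *\<^sub>R ((\<chi> n. g n (x t $ n)) + \<xi> t) + \<gamma> t *\<^sub>R w t"
    and steps: "eventually (\<lambda>t. \<alpha> t = c\<^sub>\<alpha> / real t \<and> \<beta> t = c\<^sub>\<beta> / real t powr \<tau>\<^sub>\<beta>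
      \<and> \<gamma> t = c\<^sub>\<gamma> / (sqrt (real t) * sqrt (ln (ln (real t))))) sequentially"
    and c: "0 \<le> c\<^sub>\<alpha>" "0 < c\<^sub>\<beta>" "0 \<le> c\<^sub>\<gamma>" and \<tau>\<^sub>\<beta>: "0 < \<tau>\<^sub>\<beta>"
    and \<xi>: "\<forall>e>0. eventually (\<lambda>t. norm (\<xi> t) \<le> real t powr (1/2 + e)) sequentially"
    and w: "eventually (\<lambda>t. norm (w t) \<le> C\<^sub>w * ln (real t)) sequentially" "0 \<le> C\<^sub>w"
  shows "\<forall>\<tau>. 0 \<le> \<tau> \<and> \<tau> < 1/2 - \<tau>\<^sub>\<beta> \<longrightarrow>
    (\<forall>n. (\<lambda>t. real t powr \<tau> * norm (x t $ n - (1 / real CARD('n)) *\<^sub>R (\<Sum>m\<in>UNIV. x t $ m))) \<longlonglongrightarrow> 0)"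
proof (intro allI impI)
  fix \<tau> :: real and n :: 'n
  assume "0 \<le> \<tau> \<and> \<tau> < 1/2 - \<tau>\<^sub>\<beta>"
  then have \<tau>: "0 \<le> \<tau>" "\<tau> < 1/2 - \<tau>\<^sub>\<beta>" by simp_all
  interpret consensus_gradient_iteration E g K C1 \<alpha> \<beta> x "\<lambda>t. \<gamma> t *\<^sub>R w t - \<alpha> t *\<^sub>R \<xi> t"
    using graph lipschitz outward recursion by unfold_locales (simp_all add: nodewise_def algebra_simps)
  define e where "e = (1/2 - \<tau>\<^sub>\<beta> - \<tau>) / 2"
  have e: "0 < e" "\<tau> < 1/2 - \<tau>\<^sub>\<beta> - e" using \<tau> unfolding e_def by (simp_all add: field_simps)
  have steps_\<alpha>\<beta>: "eventually (\<lambda>t. \<alpha> t = c\<^sub>\<alpha> / real t \<and> \<beta> t = c\<^sub>\<beta> / real t powr \<tau>\<^sub>\<beta>) sequentially"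
    and steps_\<alpha>\<gamma>: "eventually (\<lambda>t. \<alpha> t = c\<^sub>\<alpha> / real t
      \<and> \<gamma> t = c\<^sub>\<gamma> / (sqrt (real t) * sqrt (ln (ln (real t))))) sequentially"
    using steps by (auto elim: eventually_mono)
  note noise = step_noise_le_powr[OF steps_\<alpha>\<gamma> \<xi>[rule_format, OF e(1)] w(1) c(1,3) w(2) e(1)]
  have "(\<lambda>t. real t powr \<tau> * norm (disagreement (x t))) \<longlonglongrightarrow> 0"
    using disagreement_tendsto_zero[OF steps_\<alpha>\<beta> c(1,2) \<tau>\<^sub>\<beta> noise] c w(2) e \<tau>
    by simp
  then show "(\<lambda>t. real t powr \<tau> * norm (x t $ n - (1 / real CARD('n)) *\<^sub>R (\<Sum>m\<in>UNIV. x t $ m)))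
      \<longlonglongrightarrow> 0"
    by (rule Lim_null_comparison[rotated])
      (simp add: always_eventually mult_left_mono norm_nth_disagreement_le)
qed

lemma (in prob_space) AE_eventually_le_of_summable_tail:
  fixes f :: "nat \<Rightarrow> 'a \<Rightarrow> real"
  assumes meas: "\<And>t. f t \<in> borel_measurable M"
    and tail: "\<And>t. t \<ge> T \<Longrightarrow> emeasure M {\<omega>\<in>space M. b t < f t \<omega>} \<le> ennreal (p t)"
    and p: "summable p" "\<And>t. 0 \<le> p t"
  shows "AE \<omega> in M. eventually (\<lambda>t. f t \<omega> \<le> b t) sequentially"
proof -
  define A where "A t = (if t \<ge> T then {\<omega>\<in>space M. b t < f t \<omega>} else {})" for t
  have [measurable]: "f t \<in> borel_measurable M" for t by (rule meas)
  have "{\<omega>\<in>space M. b t < f t \<omega>} \<in> events" for t by measurable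
  then have [measurable]: "A t \<in> events" for t by (simp add: A_def)
  have "measure M (A t) \<le> p t" for t
    using tail[of t] p(2)[of t] by (auto simp: A_def emeasure_eq_measure)
  then have "summable (\<lambda>t. measure M (A t))"
    using p by (intro summable_comparison_test'[OF p(1), of 0]) auto
  then have "AE \<omega> in M. eventually (\<lambda>t. \<omega> \<in> space M - A t) sequentially"
    by (intro borel_cantelli_AE1) (auto simp: emeasure_eq_measure)
  then show ?thesis
  proof (rule AE_mp, intro AE_I2 impI)
    fix \<omega> assume \<omega>: "\<omega> \<in> space M" and ev: "eventually (\<lambda>t. \<omega> \<in> space M - A t) sequentially"
    show "eventually (\<lambda>t. f t \<omega> \<le> b t) sequentially"
      using ev eventually_ge_at_top[of T] by eventually_elim (use \<omega> in \<open>auto simp: A_def not_less\<close>)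
  qed
qed

lemma (in prob_space) AE_eventually_le_powr_of_second_moment:
  fixes f :: "nat \<Rightarrow> 'a \<Rightarrow> real"
  assumes meas: "\<And>t. f t \<in> borel_measurable M"
    and moment: "\<And>t. (\<integral>\<^sup>+\<omega>. ennreal ((f t \<omega>)\<^sup>2) \<partial>M) \<le> ennreal B" and e: "0 < e"
  shows "AE \<omega> in M. eventually (\<lambda>t. f t \<omega> \<le> real t powr (1/2 + e)) sequentially"
proof (rule AE_eventually_le_of_summable_tail[OF meas])
  show "summable (\<lambda>t. max B 0 * real t powr (-(1 + 2 * e)))"
    using e by (intro summable_mult) (simp add: summable_real_powr_iff)
  show "0 \<le> max B 0 * real t powr (-(1 + 2 * e))" for t by simp
  fix t :: nat assume "1 \<le> t"
  then have t: "0 < real t" by simp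
  define c where "c = real t powr (-(1 + 2 * e))"
  have c: "0 < c" unfolding c_def using t by simp
  have "{\<omega>\<in>space M. real t powr (1/2 + e) < f t \<omega>} \<subseteq> {\<omega>\<in>space M. 1 \<le> ennreal c * ennreal ((f t \<omega>)\<^sup>2)}"
  proof safe
    fix \<omega> assume "real t powr (1/2 + e) < f t \<omega>"
    then have "(real t powr (1/2 + e))\<^sup>2 < (f t \<omega>)\<^sup>2" by (intro power_strict_mono) auto
    then have "real t powr (1 + 2 * e) < (f t \<omega>)\<^sup>2"
      using t by (simp add: power2_eq_square flip: powr_add)
    then have "1 \<le> c * (f t \<omega>)\<^sup>2" using t unfolding c_def powr_minus by (simp add: field_simps)
    then show "1 \<le> ennreal c * ennreal ((f t \<omega>)\<^sup>2)" using c by (simp flip: ennreal_mult)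
  qed
  then have "emeasure M {\<omega>\<in>space M. real t powr (1/2 + e) < f t \<omega>}
      \<le> emeasure M {\<omega>\<in>space M. 1 \<le> ennreal c * ennreal ((f t \<omega>)\<^sup>2)}"
    by (rule emeasure_mono) (use meas[of t] in measurable)
  also have "\<dots> \<le> ennreal c * (\<integral>\<^sup>+\<omega>. ennreal ((f t \<omega>)\<^sup>2) * indicator (space M) \<omega> \<partial>M)"
    by (rule nn_integral_Markov_inequality) (use meas[of t] in auto)
  also have "(\<integral>\<^sup>+\<omega>. ennreal ((f t \<omega>)\<^sup>2) * indicator (space M) \<omega> \<partial>M) = (\<integral>\<^sup>+\<omega>. ennreal ((f t \<omega>)\<^sup>2) \<partial>M)"
    by (rule nn_integral_cong) simp
  also have "ennreal c * \<dots> \<le> ennreal c * ennreal B" by (rule mult_left_mono[OF moment]) simp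
  also have "\<dots> \<le> ennreal (max B 0 * c)"
    using c by (cases "B \<ge> 0") (auto simp: mult.commute ennreal_neg simp flip: ennreal_mult)
  finally show "emeasure M {\<omega>\<in>space M. real t powr (1/2 + e) < f t \<omega>}
      \<le> ennreal (max B 0 * real t powr (-(1 + 2 * e)))"
    unfolding c_def .
qed

lemma (in prob_space) AE_all_eventually_le_powr_of_second_moment:
  fixes f :: "nat \<Rightarrow> 'a \<Rightarrow> real"
  assumes meas: "\<And>t. f t \<in> borel_measurable M"
    and moment: "\<And>t. (\<integral>\<^sup>+\<omega>. ennreal ((f t \<omega>)\<^sup>2) \<partial>M) \<le> ennreal B"
  shows "AE \<omega> in M. \<forall>e>0. eventually (\<lambda>t. f t \<omega> \<le> real t powr (1/2 + e)) sequentially"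
proof -
  have "AE \<omega> in M. \<forall>k. eventually (\<lambda>t. f t \<omega> \<le> real t powr (1/2 + 1 / Suc k)) sequentially"
    unfolding AE_all_countable
    by (intro allI AE_eventually_le_powr_of_second_moment[OF meas moment]) simp
  then show ?thesis
  proof (rule eventually_mono, intro allI impI)
    fix \<omega> and e :: real
    assume all_k: "\<forall>k. eventually (\<lambda>t. f t \<omega> \<le> real t powr (1/2 + 1 / Suc k)) sequentially"
      and "0 < e"
    then obtain k where k: "1 / Suc k < e" by (metis nat_approx_posE)
    show "eventually (\<lambda>t. f t \<omega> \<le> real t powr (1/2 + e)) sequentially"
      using all_k[rule_format, of k] eventually_ge_at_top[of 1]
      by eventually_elim (use k in \<open>smt (verit) of_nat_1 of_nat_mono powr_mono\<close>)
  qed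
qed

lemma (in prob_space) AE_eventually_le_ln_of_exp_moment:
  fixes f :: "nat \<Rightarrow> 'a \<Rightarrow> real"
  assumes meas: "\<And>t. f t \<in> borel_measurable M"
    and moment: "\<And>t. (\<integral>\<^sup>+\<omega>. ennreal (exp (f t \<omega>)) \<partial>M) \<le> ennreal C"
  shows "AE \<omega> in M. eventually (\<lambda>t. f t \<omega> \<le> 2 * ln (real t)) sequentially"
proof (rule AE_eventually_le_of_summable_tail[OF meas])
  show "summable (\<lambda>t. max C 0 * real t powr (-2))"
    by (intro summable_mult) (simp add: summable_real_powr_iff)
  show "0 \<le> max C 0 * real t powr (-2)" for t by simp
  fix t :: nat assume "1 \<le> t"
  then have t: "0 < real t" by simp
  have "emeasure M {\<omega>\<in>space M. 2 * ln (real t) < f t \<omega>} \<le> emeasure M {\<omega>\<in>space M. f t \<omega> \<ge> 2 * ln (real t)}"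
    by (rule emeasure_mono) (use meas[of t] in auto)
  also have "\<dots> \<le> ennreal (exp (-1 * (2 * ln (real t))))
      * (\<integral>\<^sup>+\<omega>. ennreal (exp (1 * f t \<omega>)) * indicator (space M) \<omega> \<partial>M)"
    by (rule Chernoff_ineq_nn_integral_ge) (use meas[of t] in auto)
  also have "(\<integral>\<^sup>+\<omega>. ennreal (exp (1 * f t \<omega>)) * indicator (space M) \<omega> \<partial>M)
      = (\<integral>\<^sup>+\<omega>. ennreal (exp (f t \<omega>)) \<partial>M)"
    by (rule nn_integral_cong) simp
  also have "exp (-1 * (2 * ln (real t))) = real t powr (-2)"
    using t by (simp add: powr_def)
  also have "ennreal (real t powr (-2)) * (\<integral>\<^sup>+\<omega>. ennreal (exp (f t \<omega>)) \<partial>M)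
      \<le> ennreal (real t powr (-2)) * ennreal C"
    by (rule mult_left_mono[OF moment]) simp
  also have "\<dots> \<le> ennreal (max C 0 * real t powr (-2))"
    by (cases "C \<ge> 0") (auto simp: mult.commute ennreal_neg simp flip: ennreal_mult)
  finally show "emeasure M {\<omega>\<in>space M. 2 * ln (real t) < f t \<omega>} \<le> ennreal (max C 0 * real t powr (-2))" .
qed

lemma prod_vec_nth_eq_prod_Basis:
  fixes h :: "real \<Rightarrow> 'b::comm_monoid_mult"
  shows "(\<Prod>i\<in>UNIV. h ((x::real^'d) $ i)) = (\<Prod>b\<in>Basis. h (x \<bullet> b))"
proof -
  have inj: "inj (\<lambda>i::'d. axis i (1::real))" by (auto simp: inj_def axis_eq_axis)
  have Basis: "(Basis :: (real^'d) set) = range (\<lambda>i. axis i 1)" by (auto simp: Basis_vec_def)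
  have "(\<Prod>b\<in>Basis. h (x \<bullet> b)) = (\<Prod>i\<in>UNIV. h (x \<bullet> axis i 1))"
    unfolding Basis by (subst prod.reindex[OF inj]) simp
  then show ?thesis by (simp add: inner_axis)
qed

lemma std_normal_density_mult_exp_abs_le:
  "std_normal_density y * exp \<bar>y\<bar> \<le> exp 1 * sqrt 2 * normal_density 0 (sqrt 2) y"
proof -
  have "- y\<^sup>2 / 2 + \<bar>y\<bar> \<le> 1 - y\<^sup>2 / 4"
    using zero_le_power2[of "\<bar>y\<bar> / 2 - 1"] by (simp add: power2_eq_square algebra_simps)
  then have "exp (- y\<^sup>2 / 2) * exp \<bar>y\<bar> \<le> exp 1 * exp (- y\<^sup>2 / 4)"
    by (simp flip: exp_add)
  then have "std_normal_density y * exp \<bar>y\<bar> \<le> 1 / sqrt (2 * pi) * (exp 1 * exp (- y\<^sup>2 / 4))"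
    unfolding std_normal_density_def by (simp add: divide_right_mono)
  also have "\<dots> = exp 1 * sqrt 2 * (1 / sqrt (2 * 2 * pi) * exp (- y\<^sup>2 / 4))"
    by (simp add: real_sqrt_mult field_simps)
  finally show ?thesis by (simp add: normal_density_def)
qed

lemma nn_integral_std_gaussian_exp_norm_finite:
  "(\<integral>\<^sup>+x. ennreal (exp (norm x)) \<partial>(std_gaussian :: (real^'d) measure)) < \<infinity>"
proof -
  define F where "F y = std_normal_density y * exp \<bar>y\<bar>" for y
  have F: "0 \<le> F y" for y unfolding F_def by simp
  have "(\<integral>\<^sup>+y. ennreal (F y) \<partial>lborel)
      \<le> (\<integral>\<^sup>+y. ennreal (exp 1 * sqrt 2) * normal_density 0 (sqrt 2) y \<partial>lborel)"
    unfolding F_def using std_normal_density_mult_exp_abs_le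
    by (intro nn_integral_mono) (simp flip: ennreal_mult)
  also have "\<dots> = ennreal (exp 1 * sqrt 2)"
    by (subst nn_integral_cmult) (simp_all add: nn_integral_eq_integral integrable_normal_density)
  finally have F_finite: "(\<integral>\<^sup>+y. ennreal (F y) \<partial>lborel) < \<infinity>"
    by (simp add: le_less_trans)
  have "(\<integral>\<^sup>+x. ennreal (exp (norm x)) \<partial>(std_gaussian :: (real^'d) measure))
      = (\<integral>\<^sup>+x. ennreal ((\<Prod>i\<in>UNIV. std_normal_density (x $ i)) * exp (norm (x::real^'d))) \<partial>lborel)"
    unfolding std_gaussian_def
    by (subst nn_integral_density) (auto simp: prod_nonneg intro!: nn_integral_cong simp flip: ennreal_mult)
  also have "\<dots> \<le> (\<integral>\<^sup>+x. (\<Prod>b\<in>Basis. ennreal (F ((x::real^'d) \<bullet> b))) \<partial>lborel)"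
  proof (rule nn_integral_mono)
    fix x :: "real^'d"
    have "exp (norm x) \<le> exp (\<Sum>i\<in>UNIV. \<bar>x $ i\<bar>)"
      using norm_le_l1_cart[of x] by simp
    also have "\<dots> = (\<Prod>i\<in>UNIV. exp \<bar>x $ i\<bar>)"
      by (simp add: exp_sum)
    finally have "exp (norm x) \<le> (\<Prod>i\<in>UNIV. exp \<bar>x $ i\<bar>)" .
    then have "(\<Prod>i\<in>UNIV. std_normal_density (x $ i)) * exp (norm x) \<le> (\<Prod>i\<in>UNIV. F (x $ i))"
      by (simp add: F_def prod.distrib mult_left_mono prod_nonneg)
    moreover have "(\<Prod>b\<in>Basis. ennreal (F (x \<bullet> b))) = ennreal (\<Prod>i\<in>UNIV. F (x $ i))"
      by (simp add: prod_ennreal F prod_vec_nth_eq_prod_Basis)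
    ultimately show "ennreal ((\<Prod>i\<in>UNIV. std_normal_density (x $ i)) * exp (norm x))
        \<le> (\<Prod>b\<in>Basis. ennreal (F (x \<bullet> b)))"
      by (simp add: ennreal_leI)
  qed
  also have "\<dots> = (\<Prod>b\<in>(Basis::(real^'d) set). \<integral>\<^sup>+y. ennreal (F y) \<partial>lborel)"
    by (rule nn_integral_lborel_prod) (auto simp: F_def)
  also have "\<dots> < \<infinity>"
    using F_finite by (simp add: power_less_top_ennreal)
  finally show ?thesis .
qed

lemma (in prob_space) AE_eventually_norm_le_ln_of_std_gaussian:
  fixes W :: "nat \<Rightarrow> 'a \<Rightarrow> real^'d^'n::finite"
  assumes meas: "\<And>t. W t \<in> borel_measurable M"
    and gaussian: "\<And>t n. distr M borel (\<lambda>\<omega>. W t \<omega> $ n) = std_gaussian"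
  shows "AE \<omega> in M. eventually (\<lambda>t. norm (W t \<omega>) \<le> 2 * real CARD('n) * ln (real t)) sequentially"
proof -
  define C where "C = enn2real (\<integral>\<^sup>+y. ennreal (exp (norm y)) \<partial>(std_gaussian :: (real^'d) measure))"
  have W_nth: "(\<lambda>\<omega>. W t \<omega> $ n) \<in> borel_measurable M" for t n
    using measurable_compose[OF meas[of t]
        borel_measurable_continuous_onI[OF linear_continuous_on[OF bounded_linear_vec_nth]]] by simp
  have "(\<integral>\<^sup>+\<omega>. ennreal (exp (norm (W t \<omega> $ n))) \<partial>M)
      = (\<integral>\<^sup>+y. ennreal (exp (norm y)) \<partial>(std_gaussian :: (real^'d) measure))" for t n
    unfolding gaussian[of t n, symmetric] using W_nth by (simp add: nn_integral_distr)
  then have "(\<integral>\<^sup>+\<omega>. ennreal (exp (norm (W t \<omega> $ n))) \<partial>M) = ennreal C" for t n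
    using nn_integral_std_gaussian_exp_norm_finite[where 'd = 'd] unfolding C_def by simp
  then have "AE \<omega> in M. \<forall>n\<in>UNIV. eventually (\<lambda>t. norm (W t \<omega> $ n) \<le> 2 * ln (real t)) sequentially"
    using W_nth by (intro AE_finite_allI AE_eventually_le_ln_of_exp_moment) auto
  then show ?thesis
  proof (rule eventually_mono)
    fix \<omega> assume "\<forall>n\<in>UNIV. eventually (\<lambda>t. norm (W t \<omega> $ n) \<le> 2 * ln (real t)) sequentially"
    then have "eventually (\<lambda>t. \<forall>n. norm (W t \<omega> $ n) \<le> 2 * ln (real t)) sequentially"
      by (simp add: eventually_all_finite)
    then show "eventually (\<lambda>t. norm (W t \<omega>) \<le> 2 * real CARD('n) * ln (real t)) sequentially"
    proof eventually_elim
      case (elim t)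
      have "norm (W t \<omega>) \<le> (\<Sum>n\<in>UNIV. norm (W t \<omega> $ n))"
        unfolding norm_vec_def by (rule L2_set_le_sum) simp
      also have "\<dots> \<le> 2 * real CARD('n) * ln (real t)"
        using sum_mono[of UNIV "\<lambda>n. norm (W t \<omega> $ n)" "\<lambda>_. 2 * ln (real t)"] elim by simp
      finally show ?case .
    qed
  qed
qed

lemma subalgebra_nat_filtration:
  assumes "\<And>t. x t \<in> borel_measurable M" "\<And>t. \<xi> t \<in> borel_measurable M" "\<And>t. w t \<in> borel_measurable M"
  shows "subalgebra M (nat_filtration M x \<xi> w t)"
proof -
  have gen: "gen_sets M X \<subseteq> sets M" if "X \<in> borel_measurable M" for X :: "'a \<Rightarrow> 'b"
    using that unfolding gen_sets_def by (auto intro: measurable_sets)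
  define G where "G = (\<Union>s\<in>{..t}. gen_sets M (x s)) \<union> (\<Union>s\<in>{..<t}. gen_sets M (\<xi> s) \<union> gen_sets M (w s))"
  have "G \<subseteq> sets M" unfolding G_def using gen assms by blast
  then show ?thesis
    unfolding subalgebra_def nat_filtration_def G_def[symmetric]
    using sets.sets_into_space
    by (auto simp: space_measure_of_conv sets_measure_of_conv sets.sigma_sets_subset)
qed

lemma (in prob_space) nn_integral_le_of_AE_nn_cond_exp_less:
  assumes F: "subalgebra M F" and f: "f \<in> borel_measurable M"
    and bound: "AE \<omega> in M. nn_cond_exp M F f \<omega> < ennreal B"
  shows "(\<integral>\<^sup>+\<omega>. f \<omega> \<partial>M) \<le> ennreal B"
proof -
  interpret sigma_finite_subalgebra M F
    using F finite_measure_axioms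
    by (intro finite_measure_subalgebra_is_sigma_finite)
      (simp add: finite_measure_subalgebra_def finite_measure_subalgebra_axioms_def)
  have "(\<integral>\<^sup>+\<omega>. f \<omega> \<partial>M) = (\<integral>\<^sup>+\<omega>. nn_cond_exp M F f \<omega> \<partial>M)"
    using nn_cond_exp_intg[of "\<lambda>_. 1" f] f by simp
  also have "\<dots> \<le> (\<integral>\<^sup>+\<omega>. ennreal B \<partial>M)"
    using bound by (intro nn_integral_mono_AE) (auto elim: AE_mp)
  also have "\<dots> = ennreal B" by (simp add: emeasure_space_1)
  finally show ?thesis .
qed

lemma (in prob_space) AE_all_eventually_norm_le_powr_of_cond_second_moment:
  fixes \<xi> :: "nat \<Rightarrow> 'a \<Rightarrow> real^'d^'n::finite"
  assumes F: "\<And>t. subalgebra M (F t)" and meas: "\<And>t. \<xi> t \<in> borel_measurable M"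
    and moment: "\<And>t. AE \<omega> in M. nn_cond_exp M (F t) (\<lambda>\<omega>. ennreal ((norm (\<xi> t \<omega>))\<^sup>2)) \<omega> < ennreal B"
  shows "AE \<omega> in M. \<forall>e>0. eventually (\<lambda>t. norm (\<xi> t \<omega>) \<le> real t powr (1/2 + e)) sequentially"
proof (rule AE_all_eventually_le_powr_of_second_moment)
  show "(\<lambda>\<omega>. norm (\<xi> t \<omega>)) \<in> borel_measurable M" for t using meas[of t] by measurable
  show "(\<integral>\<^sup>+\<omega>. ennreal ((norm (\<xi> t \<omega>))\<^sup>2) \<partial>M) \<le> ennreal B" for t
    using F _ moment by (rule nn_integral_le_of_AE_nn_cond_exp_less) (use meas[of t] in measurable)
qed

theorem lemma3:
  fixes U :: "'n::finite \<Rightarrow> real^'d \<Rightarrow> real"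
    and g :: "'n \<Rightarrow> real^'d \<Rightarrow> real^'d"
    and H :: "'n \<Rightarrow> real^'d \<Rightarrow> ((real^'d) \<Rightarrow>\<^sub>L (real^'d))"
    and K C1 B c\<^sub>\<alpha> c\<^sub>\<beta> c\<^sub>\<gamma> \<tau>\<^sub>\<beta> :: real
    and E :: "'n \<Rightarrow> 'n \<Rightarrow> bool"
    and M :: "'a measure"
    and x \<xi> w :: "nat \<Rightarrow> 'a \<Rightarrow> real^'d^'n"
    and x0 :: "real^'d^'n"
    and \<alpha> \<beta> \<gamma> :: "nat \<Rightarrow> real"
  defines "Ubar \<equiv> (\<lambda>y. \<Sum>n\<in>UNIV. U n y)"
    and "G \<equiv> (\<lambda>y. \<Sum>n\<in>UNIV. g n y)"
    and "F \<equiv> nat_filtration M x \<xi> w"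
  assumes A1_K: "K > 0"
    and A1_grad: "\<And>n y. GDERIV (U n) y :> g n y"
    and A1_hess: "\<And>n y. (g n has_derivative blinfun_apply (H n y)) (at y)"
    and A1_C2: "\<And>n. continuous_on UNIV (H n)"
    and A1_lip: "\<And>n. K-lipschitz_on UNIV (g n)"
    and A2_coercive: "\<And>n. filterlim (U n) at_top at_infinity"
    and A2_C1: "C1 > 0"
    and A2_inner: "\<And>n y. norm y \<ge> C1 \<Longrightarrow> inner y (g n y) \<ge> 0"
    and A3_min: "(\<exists>y. Ubar y = 0) \<and> (\<forall>y. Ubar y \<ge> 0)"
    and A3_inf: "\<exists>c. \<forall>y. (norm (G y))\<^sup>2 - (\<Sum>n\<in>UNIV. trace_hessian (H n) y) \<ge> c"
    and A4: "\<exists>\<mu>. weak_limit_at_zero (gibbs_measure Ubar) \<mu>"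
    and A5_angle: "Liminf at_infinity
        (\<lambda>y. ereal (inner ((1 / norm (G y)) *\<^sub>R G y) ((1 / norm y) *\<^sub>R y)))
        \<ge> ereal (sqrt ((4 * real CARD('d) - 4) / (4 * real CARD('d) - 3)))"
    and A5_lower: "Liminf at_infinity (\<lambda>y. ereal (norm (G y) / norm y)) > 0"
    and A5_upper: "Limsup at_infinity (\<lambda>y. ereal (norm (G y) / norm y)) < \<infinity>"
    and G_undirected: "undirected_graph E"
    and G_connected: "connected_graph E"
    and prob: "prob_space M"
    and x_meas: "\<And>t. x t \<in> borel_measurable M"
    and xi_meas: "\<And>t. \<xi> t \<in> borel_measurable M"
    and w_meas: "\<And>t. w t \<in> borel_measurable M"
    and x_init: "\<And>\<omega>. \<omega> \<in> space M \<Longrightarrow> x 0 \<omega> = x0"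
    and recursion: "\<And>t \<omega>. \<omega> \<in> space M \<Longrightarrow>
        x (Suc t) \<omega> = x t \<omega> - \<beta> t *\<^sub>R kron_laplacian (graph_laplacian E) (x t \<omega>)
          - \<alpha> t *\<^sub>R ((\<chi> n. g n (x t \<omega> $ n)) + \<xi> t \<omega>) + \<gamma> t *\<^sub>R w t \<omega>"
    and A6_adapted: "\<And>t. \<xi> t \<in> borel_measurable (F (Suc t))"
    and A6_mean: "\<And>t n i. AE \<omega> in M. real_cond_exp M (F t) (\<lambda>\<omega>. \<xi> t \<omega> $ n $ i) \<omega> = 0"
    and A6_B: "B > 0"
    and A6_var: "\<And>t. AE \<omega> in M.
        nn_cond_exp M (F t) (\<lambda>\<omega>. ennreal ((norm (\<xi> t \<omega>))\<^sup>2)) \<omega> < ennreal B"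
    and A7_gauss: "\<And>t n. distr M borel (\<lambda>\<omega>. w t \<omega> $ n) = std_gaussian"
    and A7_iid: "\<And>n. prob_space.indep_vars M (\<lambda>_. borel) (\<lambda>t \<omega>. w t \<omega> $ n) UNIV"
    and A7_indep_nodes: "prob_space.indep_vars M (\<lambda>_. Pi\<^sub>M UNIV (\<lambda>_. borel))
        (\<lambda>n \<omega> t. w t \<omega> $ n) UNIV"
    and A7_indep_past: "\<And>t n. prob_space.indep_set M (sets (F t)) (gen_sets M (\<lambda>\<omega>. w t \<omega> $ n))"
    and A8_c: "c\<^sub>\<alpha> > 0" "c\<^sub>\<beta> > 0" "c\<^sub>\<gamma> > 0"
    and A8_tau: "0 < \<tau>\<^sub>\<beta>" "\<tau>\<^sub>\<beta> < 1/2"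
    and A8_steps: "eventually (\<lambda>t. \<alpha> t = c\<^sub>\<alpha> / real t \<and> \<beta> t = c\<^sub>\<beta> / real t powr \<tau>\<^sub>\<beta>
        \<and> \<gamma> t = c\<^sub>\<gamma> / (sqrt (real t) * sqrt (ln (ln (real t))))) sequentially"
  shows "AE \<omega> in M. \<forall>\<tau>. 0 \<le> \<tau> \<and> \<tau> < 1/2 - \<tau>\<^sub>\<beta> \<longrightarrow>
     (\<forall>n. ((\<lambda>t. real t powr \<tau> *
        norm (x t \<omega> $ n - (1 / real CARD('n)) *\<^sub>R (\<Sum>m\<in>UNIV. x t \<omega> $ m))) \<longlonglongrightarrow> 0))"
proof -
  interpret prob_space M by (rule prob)
  have "AE \<omega> in M. \<forall>e>0. eventually (\<lambda>t. norm (\<xi> t \<omega>) \<le> real t powr (1/2 + e)) sequentially"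
    using subalgebra_nat_filtration[OF x_meas xi_meas w_meas] xi_meas A6_var unfolding F_def
    by (rule AE_all_eventually_norm_le_powr_of_cond_second_moment)
  moreover have "AE \<omega> in M. eventually (\<lambda>t. norm (w t \<omega>) \<le> 2 * real CARD('n) * ln (real t))
      sequentially"
    using w_meas A7_gauss by (rule AE_eventually_norm_le_ln_of_std_gaussian)
  ultimately show ?thesis
    using AE_space
  proof eventually_elim
    case (elim \<omega>)
    show ?case
      using consensus_rate_of_noise_growth[OF G_undirected G_connected A1_lip _ A2_inner _
          recursion[OF elim(3)] A8_steps _ _ _ _ elim(1,2)] A1_K A2_C1 A8_c A8_tau
      by simp
  qed
qed

end
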